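(* Let $0<x_{0}<x_{1}<\infty$, $g\in C^{1}[x_{0},x_{1}]$ with $g>0$ on $[x_{0},x_{1}]$, $w\in C[x_{0},x_{1}]$ with $w\ge0$ a.e., and $q\in L^{\infty}[x_{0},x_{1}]$ with $q\ge0$ a.e. On $H=L^{1}[x_{0},x_{1}]$ define $\mathcal{L}[p]=-(gp)'-wp$ with domain $\mathcal{D}(\mathcal{L})=\{\phi\in H:(g\phi)'\in H,\ (g\phi)(x_{0})=\int_{x_{0}}^{x_{1}}q(x)\phi(x)\,dx\}$. Then $\mathcal{L}$ has a compact resolvent, i.e. its resolvent set $\rho(\mathcal{L})$ is nonempty and $R(\lambda,\mathcal{L})$ is compact for all $\lambda\in\rho(\mathcal{L})$. *)

theory Defs
  imports "HOL-Analysis.Analysis"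
begin

text \<open>The space H = L^1[a,b] of complex-valued integrable functions, represented by
  functions real => complex that are Lebesgue integrable on [a,b]; elements of H are
  identified up to equality almost everywhere (predicate aeq).\<close>

definition L1 :: "real \<Rightarrow> real \<Rightarrow> (real \<Rightarrow> complex) set" where
  "L1 a b = {f. integrable (lebesgue_on {a..b}) f}"

definition L1norm :: "real \<Rightarrow> real \<Rightarrow> (real \<Rightarrow> complex) \<Rightarrow> real" where
  "L1norm a b f = integral\<^sup>L (lebesgue_on {a..b}) (\<lambda>x. norm (f x))"

definition aeq :: "real \<Rightarrow> real \<Rightarrow> (real \<Rightarrow> complex) \<Rightarrow> (real \<Rightarrow> complex) \<Rightarrow> bool" where
  "aeq a b f h \<longleftrightarrow> (AE x in lebesgue_on {a..b}. f x = h x)"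

text \<open>Graph of the operator  L[p] = -(g p)' - w p  with domain
  D(L) = {phi in H : (g phi)' in H, (g phi)(a) = int_a^b q phi}.
  "(g phi)' in H" means: g phi agrees a.e. with an absolutely continuous function,
  i.e. with  c + int_a^x psi  for some psi in H; then (g phi)' = psi and (g phi)(a) = c.
  The boundary condition fixes c = int_a^b q phi.
  opL_graph a b g w q phi chi  says  phi in D(L)  and  L[phi] = chi  (a.e.).\<close>

definition opL_graph ::
  "real \<Rightarrow> real \<Rightarrow> (real \<Rightarrow> real) \<Rightarrow> (real \<Rightarrow> real) \<Rightarrow> (real \<Rightarrow> real)
    \<Rightarrow> (real \<Rightarrow> complex) \<Rightarrow> (real \<Rightarrow> complex) \<Rightarrow> bool" where
  "opL_graph a b g w q \<phi> v \<longleftrightarrow>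
     \<phi> \<in> L1 a b \<and> v \<in> L1 a b \<and>
     (\<exists>\<psi> \<in> L1 a b.
        (AE x in lebesgue_on {a..b}.
           complex_of_real (g x) * \<phi> x =
             integral\<^sup>L (lebesgue_on {a..b}) (\<lambda>t. complex_of_real (q t) * \<phi> t)
             + integral\<^sup>L (lebesgue_on {a..x}) \<psi>) \<and>
        (AE x in lebesgue_on {a..b}. v x = - \<psi> x - complex_of_real (w x) * \<phi> x))"

definition shifted_injective ::
  "real \<Rightarrow> real \<Rightarrow> (real \<Rightarrow> real) \<Rightarrow> (real \<Rightarrow> real) \<Rightarrow> (real \<Rightarrow> real) \<Rightarrow> complex \<Rightarrow> bool" where
  "shifted_injective a b g w q \<mu> \<longleftrightarrow>
     (\<forall>\<phi>1 v1 \<phi>2 v2. opL_graph a b g w q \<phi>1 v1 \<and> opL_graph a b g w q \<phi>2 v2 \<and>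
        aeq a b (\<lambda>x. \<mu> * \<phi>1 x - v1 x) (\<lambda>x. \<mu> * \<phi>2 x - v2 x) \<longrightarrow> aeq a b \<phi>1 \<phi>2)"

definition resolvent_inverse ::
  "real \<Rightarrow> real \<Rightarrow> (real \<Rightarrow> real) \<Rightarrow> (real \<Rightarrow> real) \<Rightarrow> (real \<Rightarrow> real) \<Rightarrow> complex
     \<Rightarrow> ((real \<Rightarrow> complex) \<Rightarrow> (real \<Rightarrow> complex)) \<Rightarrow> bool" where
  "resolvent_inverse a b g w q \<mu> R \<longleftrightarrow>
     (\<forall>f \<in> L1 a b. \<exists>v. opL_graph a b g w q (R f) v \<and>
         aeq a b (\<lambda>x. \<mu> * R f x - v x) f)"

definition bounded_L1_map ::
  "real \<Rightarrow> real \<Rightarrow> ((real \<Rightarrow> complex) \<Rightarrow> (real \<Rightarrow> complex)) \<Rightarrow> bool" where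
  "bounded_L1_map a b R \<longleftrightarrow> (\<exists>C. \<forall>f \<in> L1 a b. L1norm a b (R f) \<le> C * L1norm a b f)"

definition resolvent_set ::
  "real \<Rightarrow> real \<Rightarrow> (real \<Rightarrow> real) \<Rightarrow> (real \<Rightarrow> real) \<Rightarrow> (real \<Rightarrow> real) \<Rightarrow> complex set" where
  "resolvent_set a b g w q =
     {\<mu>. shifted_injective a b g w q \<mu> \<and>
         (\<exists>R. resolvent_inverse a b g w q \<mu> R \<and> bounded_L1_map a b R)}"

definition compact_L1_map ::
  "real \<Rightarrow> real \<Rightarrow> ((real \<Rightarrow> complex) \<Rightarrow> (real \<Rightarrow> complex)) \<Rightarrow> bool" where
  "compact_L1_map a b R \<longleftrightarrow>
     (\<forall>(F :: nat \<Rightarrow> real \<Rightarrow> complex) B. (\<forall>n. F n \<in> L1 a b \<and> L1norm a b (F n) \<le> B) \<longrightarrow>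
        (\<exists>r h. strict_mono r \<and> h \<in> L1 a b \<and>
           (\<lambda>n. L1norm a b (\<lambda>x. R (F (r n)) x - h x)) \<longlonglongrightarrow> 0))"

end

theory Submission
  imports Defs "HOL-Probability.Helly_Selection"
begin

text \<open>
  Compactness: if g \<phi> n = c n + \<integral>[a,x] \<psi> n with bounded constants c n and L1-bounded \<psi> n,
  the primitives of the \<psi> n are differences of uniformly bounded monotone functions, so Helly's
  selection theorem yields a subsequence converging almost everywhere; since g is bounded
  below, the \<phi> n are uniformly bounded and bounded convergence gives L1-convergence. For
  \<phi> = R f with R a right inverse of \<mu> - L, one has \<psi> = f - \<mu> \<phi> - w \<phi> and c = \<integral> q \<phi>, both
  controlled by the L1-norm of f because, by injectivity, R agrees with the bounded inverse.

  Nonempty resolvent set: for real \<mu> with 2 q \<le> \<mu> + w put k = (\<mu> + w) / g and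
  e x = exp (- \<integral>[a,x] k). Then (\<mu> - L) \<phi> = f reads (g \<phi>)' = f - k g \<phi>, solved by
  g \<phi> = e (\<kappa> + \<integral>[a,x] f / e); the nonlocal boundary condition determines \<kappa> because the
  weight q e / g has mass at most 1/2. The same integrating factor shows that the
  homogeneous problem has only the trivial solution.
\<close>

lemma lebesgue_integral_eq_integral_subinterval:
  fixes f :: "real \<Rightarrow> 'a::euclidean_space"
  assumes "integrable (lebesgue_on {a..b}) f" "x \<le> b"
  shows "integral\<^sup>L (lebesgue_on {a..x}) f = integral {a..x} f"
  using integrable_subinterval[OF assms(1), of a x] assms(2)
  by (simp add: lebesgue_integral_eq_integral)

lemma integral_lebesgue_on_subinterval_indicator:
  fixes h :: "real \<Rightarrow> 'b::{banach, second_countable_topology}"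
  assumes "a \<le> s" "t \<le> b"
  shows "integral\<^sup>L (lebesgue_on {s..t}) h =
         integral\<^sup>L (lebesgue_on {a..b}) (\<lambda>x. indicator {s..t} x *\<^sub>R h x)"
proof -
  have "integral\<^sup>L (lebesgue_on {a..b}) (\<lambda>x. indicator {s..t} x *\<^sub>R h x)
      = integral\<^sup>L lebesgue (\<lambda>x. indicator {a..b} x *\<^sub>R (indicator {s..t} x *\<^sub>R h x))"
    by (rule integral_restrict_space) auto
  also have "\<dots> = integral\<^sup>L lebesgue (\<lambda>x. indicator {s..t} x *\<^sub>R h x)"
    using assms by (intro Bochner_Integration.integral_cong) (auto simp: indicator_def)
  also have "\<dots> = integral\<^sup>L (lebesgue_on {s..t}) h"
    by (rule integral_restrict_space[symmetric]) auto
  finally show ?thesis by simp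
qed

lemma integral_lebesgue_on_subinterval_cong_AE:
  fixes f h :: "real \<Rightarrow> 'b::{banach, second_countable_topology}"
  assumes "f \<in> borel_measurable (lebesgue_on {a..b})" "h \<in> borel_measurable (lebesgue_on {a..b})"
    and "AE t in lebesgue_on {a..b}. f t = h t" and "x \<in> {a..b}"
  shows "integral\<^sup>L (lebesgue_on {a..x}) f = integral\<^sup>L (lebesgue_on {a..x}) h"
proof -
  have [measurable]: "(\<lambda>x. x) \<in> borel_measurable (lebesgue_on {a..b})"
    by (rule continuous_imp_measurable_on_sets_lebesgue) (auto intro: continuous_on_id)
  note [measurable] = assms(1,2)
  have "integral\<^sup>L (lebesgue_on {a..x}) f = integral\<^sup>L (lebesgue_on {a..b}) (\<lambda>t. indicator {a..x} t *\<^sub>R f t)"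
    using assms(4) by (intro integral_lebesgue_on_subinterval_indicator) auto
  also have "\<dots> = integral\<^sup>L (lebesgue_on {a..b}) (\<lambda>t. indicator {a..x} t *\<^sub>R h t)"
    using assms(3) by (intro integral_cong_AE) (measurable, auto)
  also have "\<dots> = integral\<^sup>L (lebesgue_on {a..x}) h"
    using assms(4) by (intro integral_lebesgue_on_subinterval_indicator[symmetric]) auto
  finally show ?thesis .
qed

lemma norm_integral_subinterval_le:
  fixes \<psi> :: "real \<Rightarrow> 'a::euclidean_space"
  assumes int: "integrable (lebesgue_on {a..b}) \<psi>" and x: "x \<le> b"
  shows "norm (integral\<^sup>L (lebesgue_on {a..x}) \<psi>) \<le> integral\<^sup>L (lebesgue_on {a..b}) (\<lambda>t. norm (\<psi> t))"
proof -
  have norm_int: "integrable (lebesgue_on {a..b}) (\<lambda>t. norm (\<psi> t))" using int by auto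
  then have norm_integrable_on: "(\<lambda>t. norm (\<psi> t)) integrable_on {a..b}" by (simp add: integrable_on_lebesgue_on)
  have "norm (integral\<^sup>L (lebesgue_on {a..x}) \<psi>) \<le> integral\<^sup>L (lebesgue_on {a..x}) (\<lambda>t. norm (\<psi> t))"
    by (rule integral_norm_bound)
  also have "\<dots> = integral {a..x} (\<lambda>t. norm (\<psi> t))"
    using lebesgue_integral_eq_integral_subinterval[OF norm_int x] .
  also have "\<dots> \<le> integral {a..b} (\<lambda>t. norm (\<psi> t))"
    by (rule integral_subset_le) (use x norm_integrable_on in \<open>auto intro: integrable_on_subinterval[OF norm_integrable_on]\<close>)
  also have "\<dots> = integral\<^sup>L (lebesgue_on {a..b}) (\<lambda>t. norm (\<psi> t))"
    using lebesgue_integral_eq_integral_subinterval[OF norm_int order_refl] by simp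
  finally show ?thesis .
qed

lemma AE_lebesgue_on_notin_countable:
  assumes "countable A" "S \<in> sets lebesgue"
  shows "AE x in lebesgue_on S. x \<notin> A"
proof -
  have "A \<in> null_sets lebesgue"
    using countable_imp_null_set_lborel[OF assms(1)] null_sets_completionI by blast
  then show ?thesis
    using null_sets_restrict_space[of S lebesgue "A \<inter> S"] assms(2)
    by (intro AE_I'[of "A \<inter> S"]) (auto intro: null_set_Int2)
qed

lemma integrable_product_dominated_by_first:
  fixes f :: "real \<Rightarrow> complex" and G :: "real \<Rightarrow> real \<Rightarrow> complex"
  assumes f: "integrable (lebesgue_on {a..b}) f"
    and G_meas: "case_prod G \<in> borel_measurable (lebesgue_on {a..b} \<Otimes>\<^sub>M lebesgue_on {a..b})"
    and G_bd: "\<And>s t. t \<in> {a..b} \<Longrightarrow> norm (G s t) \<le> B * norm (f s)"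
  shows "integrable (lebesgue_on {a..b} \<Otimes>\<^sub>M lebesgue_on {a..b}) (case_prod G)"
proof -
  let ?M = "lebesgue_on {a..b}"
  interpret M: finite_measure ?M by (rule finite_measure_lebesgue_on) auto
  interpret P: pair_sigma_finite ?M ?M
    by (simp add: pair_sigma_finite_def M.sigma_finite_measure_axioms)
  have G_s_int: "integrable ?M (\<lambda>t. G s t)" if "s \<in> space ?M" for s
    using G_bd measurable_Pair2[OF G_meas that]
    by (intro M.integrable_const_bound[where B="B * norm (f s)"] AE_I2) auto
  have G_s_bd: "(\<integral>t. norm (G s t) \<partial>?M) \<le> B * measure ?M (space ?M) * norm (f s)"
    if "s \<in> space ?M" for s
  proof -
    have "(\<integral>t. norm (G s t) \<partial>?M) \<le> (\<integral>t. B * norm (f s) \<partial>?M)"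
      using G_bd G_s_int[OF that] by (intro integral_mono) auto
    also have "\<dots> = B * measure ?M (space ?M) * norm (f s)" by simp
    finally show ?thesis .
  qed
  show ?thesis
  proof (rule P.Fubini_integrable[OF G_meas])
    show "integrable ?M (\<lambda>s. \<integral>t. norm (case_prod G (s, t)) \<partial>?M)"
    proof (rule Bochner_Integration.integrable_bound)
      show "integrable ?M (\<lambda>s. B * measure ?M (space ?M) * norm (f s))" using f by simp
      show "(\<lambda>s. \<integral>t. norm (case_prod G (s, t)) \<partial>?M) \<in> borel_measurable ?M" using G_meas by measurable
      show "AE s in ?M. norm (\<integral>t. norm (case_prod G (s, t)) \<partial>?M)
          \<le> norm (B * measure ?M (space ?M) * norm (f s))"
      proof (rule AE_I2)
        fix s assume s: "s \<in> space ?M"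
        have "0 \<le> (\<integral>t. norm (G s t) \<partial>?M)" by (rule integral_nonneg_AE) simp
        then show "norm (\<integral>t. norm (case_prod G (s, t)) \<partial>?M) \<le> norm (B * measure ?M (space ?M) * norm (f s))"
          using G_s_bd[OF s] abs_ge_self[of "B * measure ?M (space ?M) * norm (f s)"] by simp
      qed
    qed
    show "AE s in ?M. integrable ?M (\<lambda>t. case_prod G (s, t))"
      by (rule AE_I2) (simp add: G_s_int)
  qed
qed

lemma integral_mult_primitive_swap:
  fixes f :: "real \<Rightarrow> complex" and h :: "real \<Rightarrow> real"
  assumes f: "integrable (lebesgue_on {a..b}) f" and h: "continuous_on {a..b} h"
  shows "integral\<^sup>L (lebesgue_on {a..b}) (\<lambda>t. complex_of_real (h t) * integral\<^sup>L (lebesgue_on {a..t}) f)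
       = integral\<^sup>L (lebesgue_on {a..b}) (\<lambda>s. complex_of_real (integral\<^sup>L (lebesgue_on {s..b}) h) * f s)"
proof -
  let ?M = "lebesgue_on {a..b}"
  interpret M: finite_measure ?M by (rule finite_measure_lebesgue_on) auto
  interpret P: pair_sigma_finite ?M ?M
    by (simp add: pair_sigma_finite_def M.sigma_finite_measure_axioms)
  obtain B where B: "\<And>t. t \<in> {a..b} \<Longrightarrow> \<bar>h t\<bar> \<le> B"
    using continuous_on_compact_bound[OF compact_Icc h] by (metis real_norm_def)
  define G where "G s t = (if s \<le> t then complex_of_real (h t) * f s else 0)" for s t
  have [measurable]: "f \<in> borel_measurable ?M" using f by auto
  have [measurable]: "h \<in> borel_measurable ?M" "(\<lambda>x. x) \<in> borel_measurable ?M"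
    using h continuous_on_id by (auto intro: continuous_imp_measurable_on_sets_lebesgue)
  have "case_prod G \<in> borel_measurable (?M \<Otimes>\<^sub>M ?M)" unfolding G_def by measurable
  moreover have "norm (G s t) \<le> B * norm (f s)" if "t \<in> {a..b}" for s t
    using B[OF that] by (auto simp: G_def norm_mult intro!: mult_right_mono)
  ultimately have G_int: "integrable (?M \<Otimes>\<^sub>M ?M) (case_prod G)"
    by (rule integrable_product_dominated_by_first[OF f])
  have inner_s: "(\<integral>s. G s t \<partial>?M) = complex_of_real (h t) * integral\<^sup>L (lebesgue_on {a..t}) f"
    if t: "t \<in> {a..b}" for t
  proof -
    have "(\<integral>s. G s t \<partial>?M) = complex_of_real (h t) * (\<integral>s. indicator {a..t} s *\<^sub>R f s \<partial>?M)"
      by (subst integral_mult_right_zero[symmetric], rule Bochner_Integration.integral_cong)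
        (auto simp: G_def indicator_def)
    then show ?thesis
      using t by (simp add: integral_lebesgue_on_subinterval_indicator[of a a t b])
  qed
  have inner_t: "(\<integral>t. G s t \<partial>?M) = complex_of_real (integral\<^sup>L (lebesgue_on {s..b}) h) * f s"
    if s: "s \<in> {a..b}" for s
  proof -
    have "(\<integral>t. G s t \<partial>?M) = complex_of_real (\<integral>t. indicator {s..b} t *\<^sub>R h t \<partial>?M) * f s"
      by (subst integral_complex_of_real[symmetric], subst integral_mult_left_zero[symmetric],
          rule Bochner_Integration.integral_cong) (auto simp: G_def indicator_def)
    then show ?thesis
      using s by (simp add: integral_lebesgue_on_subinterval_indicator[of a s b b])
  qed
  have "integral\<^sup>L ?M (\<lambda>t. complex_of_real (h t) * integral\<^sup>L (lebesgue_on {a..t}) f)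
      = (\<integral>t. (\<integral>s. G s t \<partial>?M) \<partial>?M)"
    using inner_s by (intro Bochner_Integration.integral_cong) auto
  also have "\<dots> = (\<integral>s. (\<integral>t. G s t \<partial>?M) \<partial>?M)"
    using P.Fubini_integral[of G] G_int by simp
  also have "\<dots> = integral\<^sup>L ?M (\<lambda>s. complex_of_real (integral\<^sup>L (lebesgue_on {s..b}) h) * f s)"
    using inner_t by (intro Bochner_Integration.integral_cong) auto
  finally show ?thesis .
qed

section \<open>Helly selection for primitives\<close>

text \<open>A monotone limit is continuous outside a countable set, hence almost everywhere.\<close>

lemma helly_selection_AE:
  fixes m :: "nat \<Rightarrow> real \<Rightarrow> real"
  assumes "\<And>n x. continuous (at_right x) (m n)" and "\<And>n. mono (m n)" and "\<And>n x. \<bar>m n x\<bar> \<le> K"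
    and S: "S \<in> sets lebesgue"
  shows "\<exists>r F. strict_mono r \<and> F \<in> borel_measurable borel \<and>
    (AE x in lebesgue_on S. (\<lambda>n. m (r n) x) \<longlonglongrightarrow> F x)"
proof -
  obtain r F where r: "strict_mono r" and F_mono: "mono F"
    and F_lim: "\<forall>x. continuous (at x) F \<longrightarrow> (\<lambda>n. m (r n) x) \<longlonglongrightarrow> F x"
    using Helly_selection[of m K] assms by blast
  have "AE x in lebesgue_on S. x \<notin> {x. \<not> isCont F x}"
    using mono_ctble_discont[OF F_mono] S by (rule AE_lebesgue_on_notin_countable)
  then have "AE x in lebesgue_on S. (\<lambda>n. m (r n) x) \<longlonglongrightarrow> F x"
    by eventually_elim (use F_lim in auto)
  then show ?thesis using r borel_measurable_mono[OF F_mono] by blast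
qed

text \<open>The primitives are extended constantly outside [a, b] to apply Helly's theorem on the
  real line.\<close>

lemma helly_selection_primitives_nonneg:
  fixes p :: "nat \<Rightarrow> real \<Rightarrow> real"
  assumes a_b: "a \<le> b" and int: "\<And>n. integrable (lebesgue_on {a..b}) (p n)"
    and nonneg: "\<And>n x. x \<in> {a..b} \<Longrightarrow> p n x \<ge> 0"
    and bd: "\<And>n. integral\<^sup>L (lebesgue_on {a..b}) (p n) \<le> K"
  shows "\<exists>r F. strict_mono r \<and> F \<in> borel_measurable borel \<and>
    (AE x in lebesgue_on {a..b}. (\<lambda>n. integral\<^sup>L (lebesgue_on {a..x}) (p (r n))) \<longlonglongrightarrow> F x)"
proof -
  define clamp where "clamp x = max a (min x b)" for x
  have clamp: "clamp x \<in> {a..b}" for x using a_b by (auto simp: clamp_def)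
  have clamp_mono: "x \<le> y \<Longrightarrow> clamp x \<le> clamp y" for x y by (auto simp: clamp_def)
  have clamp_cont: "continuous_on UNIV clamp" unfolding clamp_def by (intro continuous_intros)
  have p_integrable_on: "p n integrable_on {a..b}" for n by (simp add: int integrable_on_lebesgue_on)
  have p_integrable_on_sub: "p n integrable_on {a..x}" if "x \<le> b" for n x
    by (rule integrable_on_subinterval[OF p_integrable_on]) (use that in auto)
  define m where "m n x = integral {a..clamp x} (p n)" for n x
  have "continuous_on UNIV (m n)" for n
  proof -
    have "continuous_on {a..b} (\<lambda>x. integral {a..x} (p n))"
      using p_integrable_on by (rule indefinite_integral_continuous_1)
    then show ?thesis unfolding m_def
      using clamp_cont clamp by (intro continuous_on_compose2[of "{a..b}" "\<lambda>x. integral {a..x} (p n)" UNIV clamp]) auto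
  qed
  then have m_rcont: "continuous (at_right x) (m n)" for n x
    by (simp add: continuous_on_eq_continuous_within continuous_at_imp_continuous_at_within)
  have m_mono: "mono (m n)" for n
  proof
    fix x y :: real assume "x \<le> y"
    then show "m n x \<le> m n y" unfolding m_def
      using clamp[of x] clamp[of y] clamp_mono[of x y] nonneg by (intro integral_subset_le p_integrable_on_sub) auto
  qed
  have m_bd: "\<bar>m n x\<bar> \<le> K" for n x
  proof -
    have "0 \<le> m n x" unfolding m_def using clamp[of x] nonneg by (intro integral_nonneg p_integrable_on_sub) auto
    moreover have "m n x \<le> integral {a..b} (p n)" unfolding m_def
      using clamp[of x] nonneg by (intro integral_subset_le p_integrable_on_sub p_integrable_on) auto
    moreover have "integral {a..b} (p n) = integral\<^sup>L (lebesgue_on {a..b}) (p n)"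
      using int by (simp add: lebesgue_integral_eq_integral)
    ultimately show ?thesis using bd[of n] by auto
  qed
  have m_eq: "m n x = integral\<^sup>L (lebesgue_on {a..x}) (p n)" if "x \<in> {a..b}" for n x
    using that lebesgue_integral_eq_integral_subinterval[OF int, of x n] by (auto simp: m_def clamp_def)
  obtain r F where "strict_mono r" "F \<in> borel_measurable borel"
    and lim: "AE x in lebesgue_on {a..b}. (\<lambda>n. m (r n) x) \<longlonglongrightarrow> F x"
    using helly_selection_AE[of m K "{a..b}", OF m_rcont m_mono m_bd] by auto
  moreover have "AE x in lebesgue_on {a..b}. (\<lambda>n. integral\<^sup>L (lebesgue_on {a..x}) (p (r n))) \<longlonglongrightarrow> F x"
    using lim AE_space by eventually_elim (simp add: m_eq)
  ultimately show ?thesis by blast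
qed

lemma helly_selection_primitives_real:
  fixes p :: "nat \<Rightarrow> real \<Rightarrow> real"
  assumes a_b: "a \<le> b" and int: "\<And>n. integrable (lebesgue_on {a..b}) (p n)"
    and bd: "\<And>n. integral\<^sup>L (lebesgue_on {a..b}) (\<lambda>x. \<bar>p n x\<bar>) \<le> K"
  shows "\<exists>r F. strict_mono r \<and> F \<in> borel_measurable borel \<and>
    (AE x in lebesgue_on {a..b}. (\<lambda>n. integral\<^sup>L (lebesgue_on {a..x}) (p (r n))) \<longlonglongrightarrow> F x)"
proof -
  define pos where "pos n x = max 0 (p n x)" for n x
  define neg where "neg n x = max 0 (- p n x)" for n x
  have pos_int: "integrable (lebesgue_on {a..b}) (pos n)"
    and neg_int: "integrable (lebesgue_on {a..b}) (neg n)" for n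
    using int[of n] unfolding pos_def neg_def by auto
  have abs_int: "integrable (lebesgue_on {a..b}) (\<lambda>x. \<bar>p n x\<bar>)" for n
    using int by auto
  have "integral\<^sup>L (lebesgue_on {a..b}) (pos n) \<le> integral\<^sup>L (lebesgue_on {a..b}) (\<lambda>x. \<bar>p n x\<bar>)"
    "integral\<^sup>L (lebesgue_on {a..b}) (neg n) \<le> integral\<^sup>L (lebesgue_on {a..b}) (\<lambda>x. \<bar>p n x\<bar>)" for n
    by (intro integral_mono pos_int neg_int abs_int; simp add: pos_def neg_def)+
  then have bds: "integral\<^sup>L (lebesgue_on {a..b}) (pos n) \<le> K"
    "integral\<^sup>L (lebesgue_on {a..b}) (neg n) \<le> K" for n
    using bd[of n] by (meson order.trans)+
  have nonneg: "pos n x \<ge> 0" "neg n x \<ge> 0" for n x by (simp_all add: pos_def neg_def)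
  obtain r1 F1 where r1: "strict_mono r1" and F1: "F1 \<in> borel_measurable borel"
    and lim1: "AE x in lebesgue_on {a..b}. (\<lambda>n. integral\<^sup>L (lebesgue_on {a..x}) (pos (r1 n))) \<longlonglongrightarrow> F1 x"
    using helly_selection_primitives_nonneg[of a b pos, OF a_b pos_int nonneg(1) bds(1)] by blast
  obtain r2 F2 where r2: "strict_mono r2" and F2: "F2 \<in> borel_measurable borel"
    and lim2: "AE x in lebesgue_on {a..b}. (\<lambda>n. integral\<^sup>L (lebesgue_on {a..x}) (neg (r1 (r2 n)))) \<longlonglongrightarrow> F2 x"
    using helly_selection_primitives_nonneg[of a b "\<lambda>n. neg (r1 n)", OF a_b neg_int nonneg(2) bds(2)]
    by blast
  have "AE x in lebesgue_on {a..b}.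
      (\<lambda>n. integral\<^sup>L (lebesgue_on {a..x}) (p ((r1 \<circ> r2) n))) \<longlonglongrightarrow> F1 x - F2 x"
    using lim1 lim2 AE_space
  proof eventually_elim
    case (elim x)
    have "integral\<^sup>L (lebesgue_on {a..x}) (p n) =
        integral\<^sup>L (lebesgue_on {a..x}) (pos n) - integral\<^sup>L (lebesgue_on {a..x}) (neg n)" for n
    proof -
      have "p n = (\<lambda>t. pos n t - neg n t)" by (auto simp: pos_def neg_def)
      then show ?thesis using elim(3)
        by (simp add: Bochner_Integration.integral_diff integrable_subinterval[OF pos_int]
            integrable_subinterval[OF neg_int])
    qed
    then show ?case
      using tendsto_diff[OF LIMSEQ_subseq_LIMSEQ[OF elim(1) r2] elim(2)] by (simp add: o_def)
  qed
  then show ?thesis using strict_mono_o[OF r1 r2] F1 F2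
    by (intro exI[of _ "r1 \<circ> r2"] exI[of _ "\<lambda>x. F1 x - F2 x"]) auto
qed

lemma helly_selection_primitives:
  fixes \<psi> :: "nat \<Rightarrow> real \<Rightarrow> complex"
  assumes a_b: "a \<le> b" and int: "\<And>n. integrable (lebesgue_on {a..b}) (\<psi> n)"
    and bd: "\<And>n. integral\<^sup>L (lebesgue_on {a..b}) (\<lambda>x. norm (\<psi> n x)) \<le> K"
  shows "\<exists>r H. strict_mono r \<and> H \<in> borel_measurable borel \<and>
    (AE x in lebesgue_on {a..b}. (\<lambda>n. integral\<^sup>L (lebesgue_on {a..x}) (\<psi> (r n))) \<longlonglongrightarrow> H x)"
proof -
  have Re_int: "integrable (lebesgue_on {a..b}) (\<lambda>x. Re (\<psi> n x))"
    and Im_int: "integrable (lebesgue_on {a..b}) (\<lambda>x. Im (\<psi> n x))" for n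
    using int by auto
  have norm_int: "integrable (lebesgue_on {a..b}) (\<lambda>x. norm (\<psi> n x))" for n
    using int by auto
  have "integral\<^sup>L (lebesgue_on {a..b}) (\<lambda>x. \<bar>Re (\<psi> n x)\<bar>) \<le> integral\<^sup>L (lebesgue_on {a..b}) (\<lambda>x. norm (\<psi> n x))"
    "integral\<^sup>L (lebesgue_on {a..b}) (\<lambda>x. \<bar>Im (\<psi> n x)\<bar>) \<le> integral\<^sup>L (lebesgue_on {a..b}) (\<lambda>x. norm (\<psi> n x))" for n
    using Re_int[of n] Im_int[of n] norm_int[of n] abs_Re_le_cmod abs_Im_le_cmod
    by (auto intro!: integral_mono)
  then have bds: "integral\<^sup>L (lebesgue_on {a..b}) (\<lambda>x. \<bar>Re (\<psi> n x)\<bar>) \<le> K"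
    "integral\<^sup>L (lebesgue_on {a..b}) (\<lambda>x. \<bar>Im (\<psi> n x)\<bar>) \<le> K" for n
    using bd[of n] by (meson order.trans)+
  obtain r1 F1 where r1: "strict_mono r1" and F1: "F1 \<in> borel_measurable borel"
    and lim1: "AE x in lebesgue_on {a..b}.
      (\<lambda>n. integral\<^sup>L (lebesgue_on {a..x}) (\<lambda>t. Re (\<psi> (r1 n) t))) \<longlonglongrightarrow> F1 x"
    using helly_selection_primitives_real[of a b "\<lambda>n t. Re (\<psi> n t)", OF a_b Re_int bds(1)] by blast
  obtain r2 F2 where r2: "strict_mono r2" and F2: "F2 \<in> borel_measurable borel"
    and lim2: "AE x in lebesgue_on {a..b}.
      (\<lambda>n. integral\<^sup>L (lebesgue_on {a..x}) (\<lambda>t. Im (\<psi> (r1 (r2 n)) t))) \<longlonglongrightarrow> F2 x"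
    using helly_selection_primitives_real[of a b "\<lambda>n t. Im (\<psi> (r1 n) t)", OF a_b Im_int bds(2)]
    by blast
  define H where "H x = Complex (F1 x) (F2 x)" for x
  have "AE x in lebesgue_on {a..b}.
      (\<lambda>n. integral\<^sup>L (lebesgue_on {a..x}) (\<psi> ((r1 \<circ> r2) n))) \<longlonglongrightarrow> H x"
    using lim1 lim2 AE_space
  proof eventually_elim
    case (elim x)
    have "integrable (lebesgue_on {a..x}) (\<psi> n)" for n
      using elim(3) by (intro integrable_subinterval[OF int]) auto
    then have "Re (integral\<^sup>L (lebesgue_on {a..x}) (\<psi> n)) = integral\<^sup>L (lebesgue_on {a..x}) (\<lambda>t. Re (\<psi> n t))"
      "Im (integral\<^sup>L (lebesgue_on {a..x}) (\<psi> n)) = integral\<^sup>L (lebesgue_on {a..x}) (\<lambda>t. Im (\<psi> n t))" for n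
      by simp_all
    then show ?case
      using LIMSEQ_subseq_LIMSEQ[OF elim(1) r2] elim(2)
      by (simp add: tendsto_complex_iff H_def o_def)
  qed
  moreover have "H \<in> borel_measurable borel"
    using F1 F2 by (simp add: H_def borel_measurable_complex_iff)
  ultimately show ?thesis using strict_mono_o[OF r1 r2] by blast
qed

section \<open>L1 estimates and a compactness criterion\<close>

lemma L1norm_nonneg: "L1norm a b f \<ge> 0"
  unfolding L1norm_def by (rule Bochner_Integration.integral_nonneg) auto

lemma L1norm_le_of_bounded_continuous:
  fixes \<phi> :: "real \<Rightarrow> complex"
  assumes "a \<le> b" and "continuous_on {a..b} \<phi>" and "\<And>x. x \<in> {a..b} \<Longrightarrow> norm (\<phi> x) \<le> B"
  shows "L1norm a b \<phi> \<le> B * (b - a)"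
proof -
  have "L1norm a b \<phi> \<le> integral\<^sup>L (lebesgue_on {a..b}) (\<lambda>x. B)"
    unfolding L1norm_def using assms
    by (intro integral_mono continuous_imp_integrable_real continuous_intros) auto
  then show ?thesis using assms(1) by (simp add: measure_restrict_space mult.commute)
qed

lemma L1norm_cong_AE:
  assumes "f \<in> L1 a b" "h \<in> L1 a b" "aeq a b f h"
  shows "L1norm a b f = L1norm a b h"
  using assms unfolding L1norm_def L1_def aeq_def
  by (intro integral_cong_AE) (auto elim: eventually_mono)

lemma integrable_bounded_mult:
  fixes q :: "real \<Rightarrow> real" and \<phi> :: "real \<Rightarrow> complex"
  assumes "q \<in> borel_measurable (lebesgue_on {a..b})"
    and "AE x in lebesgue_on {a..b}. \<bar>q x\<bar> \<le> B"
    and "integrable (lebesgue_on {a..b}) \<phi>"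
  shows "integrable (lebesgue_on {a..b}) (\<lambda>t. complex_of_real (q t) * \<phi> t)"
proof (rule Bochner_Integration.integrable_bound[where f="\<lambda>t. complex_of_real B * \<phi> t"])
  show "integrable (lebesgue_on {a..b}) (\<lambda>t. complex_of_real B * \<phi> t)" using assms by simp
  show "(\<lambda>t. complex_of_real (q t) * \<phi> t) \<in> borel_measurable (lebesgue_on {a..b})"
    using assms by measurable
  show "AE x in lebesgue_on {a..b}. norm (complex_of_real (q x) * \<phi> x) \<le> norm (complex_of_real B * \<phi> x)"
    using assms(2) by eventually_elim (auto simp: norm_mult intro!: mult_right_mono)
qed

lemma norm_integral_bounded_mult_le:
  fixes q :: "real \<Rightarrow> real" and \<phi> :: "real \<Rightarrow> complex"
  assumes "q \<in> borel_measurable (lebesgue_on {a..b})"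
    and "AE x in lebesgue_on {a..b}. \<bar>q x\<bar> \<le> B"
    and "integrable (lebesgue_on {a..b}) \<phi>"
  shows "norm (integral\<^sup>L (lebesgue_on {a..b}) (\<lambda>t. complex_of_real (q t) * \<phi> t)) \<le> B * L1norm a b \<phi>"
proof -
  have "norm (integral\<^sup>L (lebesgue_on {a..b}) (\<lambda>t. complex_of_real (q t) * \<phi> t))
      \<le> integral\<^sup>L (lebesgue_on {a..b}) (\<lambda>t. norm (complex_of_real (q t) * \<phi> t))"
    by (rule integral_norm_bound)
  also have "\<dots> \<le> integral\<^sup>L (lebesgue_on {a..b}) (\<lambda>t. B * norm (\<phi> t))"
  proof (rule integral_mono_AE)
    show "integrable (lebesgue_on {a..b}) (\<lambda>t. norm (complex_of_real (q t) * \<phi> t))"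
      using integrable_bounded_mult[OF assms] by (rule integrable_norm)
    show "integrable (lebesgue_on {a..b}) (\<lambda>t. B * norm (\<phi> t))" using assms(3) by auto
    show "AE t in lebesgue_on {a..b}. norm (complex_of_real (q t) * \<phi> t) \<le> B * norm (\<phi> t)"
      using assms(2) by eventually_elim (auto simp: norm_mult intro!: mult_right_mono)
  qed
  finally show ?thesis by (simp add: L1norm_def)
qed

lemma continuous_on_Icc_positive_lower_bound:
  fixes g :: "real \<Rightarrow> real"
  assumes "continuous_on {a..b} g" and "\<And>x. x \<in> {a..b} \<Longrightarrow> g x > 0"
  obtains m where "m > 0" and "\<And>x. x \<in> {a..b} \<Longrightarrow> m \<le> g x"
proof (cases "a \<le> b")
  case True
  then obtain x0 where "x0 \<in> {a..b}" "\<And>y. y \<in> {a..b} \<Longrightarrow> g x0 \<le> g y"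
    using continuous_attains_inf[OF compact_Icc _ assms(1)] by fastforce
  then show ?thesis using that[of "g x0"] assms(2) by blast
qed (use that[of 1] in auto)

lemma L1_convergence_of_bounded_AE_convergence:
  fixes \<phi> :: "nat \<Rightarrow> real \<Rightarrow> complex"
  assumes a_b: "a \<le> b" and int: "\<And>n. integrable (lebesgue_on {a..b}) (\<phi> n)"
    and h: "h \<in> borel_measurable (lebesgue_on {a..b})"
    and bd: "\<And>n. AE x in lebesgue_on {a..b}. norm (\<phi> n x) \<le> M"
    and lim: "AE x in lebesgue_on {a..b}. (\<lambda>n. \<phi> n x) \<longlonglongrightarrow> h x"
  shows "h \<in> L1 a b \<and> (\<lambda>n. L1norm a b (\<lambda>x. \<phi> n x - h x)) \<longlonglongrightarrow> 0"
proof -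
  let ?M = "lebesgue_on {a..b}"
  interpret finite_measure ?M by (rule finite_measure_lebesgue_on) auto
  have bd_all: "AE x in ?M. \<forall>n. norm (\<phi> n x) \<le> M" using bd by (simp add: AE_all_countable)
  have h_bd: "AE x in ?M. norm (h x) \<le> M"
    using lim bd_all
  proof eventually_elim
    case (elim x)
    show ?case
      by (rule tendsto_upperbound[OF tendsto_norm[OF elim(1)]]) (use elim(2) in auto)
  qed
  have "integrable ?M h" by (rule integrable_const_bound[OF h_bd h])
  moreover have "(\<lambda>n. integral\<^sup>L ?M (\<lambda>x. norm (\<phi> n x - h x))) \<longlonglongrightarrow> integral\<^sup>L ?M (\<lambda>x. 0::real)"
  proof (rule integral_dominated_convergence[where w="\<lambda>x. 2 * M"])
    show "(\<lambda>x. norm (\<phi> n x - h x)) \<in> borel_measurable ?M" for n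
      using int[of n] h by measurable
    show "AE x in ?M. (\<lambda>n. norm (\<phi> n x - h x)) \<longlonglongrightarrow> 0"
      using lim by (elim eventually_mono) (rule tendsto_norm_zero[OF LIM_zero])
    show "AE x in ?M. norm (norm (\<phi> n x - h x)) \<le> 2 * M" for n
      using bd[of n] h_bd
    proof eventually_elim
      case (elim x)
      then have "norm (\<phi> n x - h x) \<le> 2 * M" using norm_triangle_ineq4[of "\<phi> n x" "h x"] by linarith
      then show ?case by simp
    qed
  qed auto
  ultimately show ?thesis by (simp add: L1_def L1norm_def)
qed

lemma norm_le_of_primitive_representation:
  fixes \<phi> \<psi> :: "real \<Rightarrow> complex"
  assumes int: "integrable (lebesgue_on {a..b}) \<psi>" and m: "m > 0" "\<And>x. x \<in> {a..b} \<Longrightarrow> m \<le> g x"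
    and rep: "AE x in lebesgue_on {a..b}.
      complex_of_real (g x) * \<phi> x = c + integral\<^sup>L (lebesgue_on {a..x}) \<psi>"
  shows "AE x in lebesgue_on {a..b}. norm (\<phi> x) \<le> (norm c + L1norm a b \<psi>) / m"
  using rep AE_space
proof eventually_elim
  case (elim x)
  then have x: "x \<in> {a..b}" by simp
  have "m * norm (\<phi> x) \<le> g x * norm (\<phi> x)" using m(2)[OF x] by (simp add: mult_right_mono)
  also have "\<dots> = norm (complex_of_real (g x) * \<phi> x)" using m(1) m(2)[OF x] by (simp add: norm_mult)
  also have "\<dots> \<le> norm c + L1norm a b \<psi>"
    using elim(1) norm_triangle_ineq[of c] norm_integral_subinterval_le[OF int, of x] x
    by (simp add: L1norm_def) (smt (verit))
  finally show ?case using m(1) by (simp add: field_simps)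
qed

lemma AE_tendsto_of_primitive_representation:
  fixes \<phi> \<psi> :: "nat \<Rightarrow> real \<Rightarrow> complex" and c :: "nat \<Rightarrow> complex"
  assumes g_pos: "\<And>x. x \<in> {a..b} \<Longrightarrow> g x > 0"
    and rep: "\<And>n. AE x in lebesgue_on {a..b}.
      complex_of_real (g x) * \<phi> n x = c n + integral\<^sup>L (lebesgue_on {a..x}) (\<psi> n)"
    and c_lim: "c \<longlonglongrightarrow> c0"
    and H_lim: "AE x in lebesgue_on {a..b}. (\<lambda>n. integral\<^sup>L (lebesgue_on {a..x}) (\<psi> n)) \<longlonglongrightarrow> H x"
  shows "AE x in lebesgue_on {a..b}. (\<lambda>n. \<phi> n x) \<longlonglongrightarrow> (c0 + H x) / complex_of_real (g x)"
proof -
  have "AE x in lebesgue_on {a..b}.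
      \<forall>n. complex_of_real (g x) * \<phi> n x = c n + integral\<^sup>L (lebesgue_on {a..x}) (\<psi> n)"
    using rep by (simp add: AE_all_countable)
  then show ?thesis using H_lim AE_space
  proof eventually_elim
    case (elim x)
    have "g x \<noteq> 0" using g_pos[of x] elim(3) by force
    then have "\<phi> n x = (c n + integral\<^sup>L (lebesgue_on {a..x}) (\<psi> n)) / complex_of_real (g x)" for n
      using elim(1) by (simp add: field_simps)
    then show ?case using c_lim elim(2) \<open>g x \<noteq> 0\<close> by (auto intro!: tendsto_intros)
  qed
qed

lemma L1_convergent_subsequence_of_bounded_primitives:
  fixes g :: "real \<Rightarrow> real" and \<phi> \<psi> :: "nat \<Rightarrow> real \<Rightarrow> complex" and c :: "nat \<Rightarrow> complex"
  assumes a_b: "a \<le> b" and g_cont: "continuous_on {a..b} g" and g_pos: "\<And>x. x \<in> {a..b} \<Longrightarrow> g x > 0"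
    and \<phi>: "\<And>n. \<phi> n \<in> L1 a b" and \<psi>: "\<And>n. \<psi> n \<in> L1 a b"
    and c_bd: "\<And>n. norm (c n) \<le> K" and \<psi>_bd: "\<And>n. L1norm a b (\<psi> n) \<le> K"
    and rep: "\<And>n. AE x in lebesgue_on {a..b}.
      complex_of_real (g x) * \<phi> n x = c n + integral\<^sup>L (lebesgue_on {a..x}) (\<psi> n)"
  shows "\<exists>r h. strict_mono r \<and> h \<in> L1 a b \<and> (\<lambda>n. L1norm a b (\<lambda>x. \<phi> (r n) x - h x)) \<longlonglongrightarrow> 0"
proof -
  let ?M = "lebesgue_on {a..b}"
  have \<psi>_int: "integrable ?M (\<psi> n)" and \<phi>_int: "integrable ?M (\<phi> n)" for n
    using \<phi> \<psi> by (simp_all add: L1_def)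
  obtain m where m: "m > 0" "\<And>x. x \<in> {a..b} \<Longrightarrow> m \<le> g x"
    using continuous_on_Icc_positive_lower_bound[OF g_cont g_pos] by blast
  obtain r1 H where r1: "strict_mono r1" and H: "H \<in> borel_measurable borel"
    and H_lim: "AE x in ?M. (\<lambda>n. integral\<^sup>L (lebesgue_on {a..x}) (\<psi> (r1 n))) \<longlonglongrightarrow> H x"
    using helly_selection_primitives[of a b \<psi> K, OF a_b \<psi>_int] \<psi>_bd unfolding L1norm_def by blast
  have "bounded (range (c \<circ> r1))" using c_bd by (auto simp: bounded_iff)
  then obtain c0 r2 where r2: "strict_mono r2" and c_lim: "(c \<circ> r1 \<circ> r2) \<longlonglongrightarrow> c0"
    using bounded_imp_convergent_subsequence by blast
  define h where "h x = (c0 + H x) / complex_of_real (g x)" for x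
  have h_meas: "h \<in> borel_measurable ?M"
  proof -
    have "g \<in> borel_measurable ?M" "(\<lambda>x. x) \<in> borel_measurable ?M"
      using g_cont continuous_on_id by (auto intro: continuous_imp_measurable_on_sets_lebesgue)
    then show ?thesis unfolding h_def using measurable_compose[OF _ H]
      by (intro borel_measurable_divide borel_measurable_add borel_measurable_const borel_measurable_of_real)
        auto
  qed
  have \<phi>_bd: "AE x in ?M. norm (\<phi> (r1 (r2 n)) x) \<le> 2 * K / m" for n
  proof -
    have "(norm (c (r1 (r2 n))) + L1norm a b (\<psi> (r1 (r2 n)))) / m \<le> 2 * K / m"
      using c_bd[of "r1 (r2 n)"] \<psi>_bd[of "r1 (r2 n)"] m(1) by (intro divide_right_mono) auto
    moreover have "AE x in ?M. norm (\<phi> (r1 (r2 n)) x)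
        \<le> (norm (c (r1 (r2 n))) + L1norm a b (\<psi> (r1 (r2 n)))) / m"
      using m by (intro norm_le_of_primitive_representation[OF \<psi>_int _ _ rep]) auto
    ultimately show ?thesis by (elim eventually_mono) linarith
  qed
  have "AE x in ?M. (\<lambda>n. integral\<^sup>L (lebesgue_on {a..x}) (\<psi> (r1 (r2 n)))) \<longlonglongrightarrow> H x"
    using H_lim by eventually_elim (drule LIMSEQ_subseq_LIMSEQ[OF _ r2], simp add: o_def)
  with c_lim have \<phi>_lim: "AE x in ?M. (\<lambda>n. \<phi> (r1 (r2 n)) x) \<longlonglongrightarrow> h x"
    unfolding h_def o_def by (intro AE_tendsto_of_primitive_representation[OF g_pos rep])
  from L1_convergence_of_bounded_AE_convergence[OF a_b \<phi>_int h_meas \<phi>_bd \<phi>_lim]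
  show ?thesis using strict_mono_o[OF r1 r2] by (intro exI[of _ "r1 \<circ> r2"] exI[of _ h]) auto
qed

section \<open>The resolvent for large real \<mu>\<close>

lemma opL_graph_diff:
  fixes q :: "real \<Rightarrow> real"
  assumes q_meas: "q \<in> borel_measurable (lebesgue_on {a..b})"
    and q_bd: "AE x in lebesgue_on {a..b}. \<bar>q x\<bar> \<le> B"
    and G1: "opL_graph a b g w q \<phi>1 v1" and G2: "opL_graph a b g w q \<phi>2 v2"
  shows "opL_graph a b g w q (\<lambda>x. \<phi>1 x - \<phi>2 x) (\<lambda>x. v1 x - v2 x)"
proof -
  let ?M = "lebesgue_on {a..b}"
  let ?I = "\<lambda>\<phi>. integral\<^sup>L ?M (\<lambda>t. complex_of_real (q t) * \<phi> t)"
  obtain \<psi>1 where int1: "integrable ?M \<phi>1" "integrable ?M v1" "integrable ?M \<psi>1"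
    and rep1: "AE x in ?M. complex_of_real (g x) * \<phi>1 x = ?I \<phi>1 + integral\<^sup>L (lebesgue_on {a..x}) \<psi>1"
    and v1: "AE x in ?M. v1 x = - \<psi>1 x - complex_of_real (w x) * \<phi>1 x"
    using G1 unfolding opL_graph_def L1_def by auto
  obtain \<psi>2 where int2: "integrable ?M \<phi>2" "integrable ?M v2" "integrable ?M \<psi>2"
    and rep2: "AE x in ?M. complex_of_real (g x) * \<phi>2 x = ?I \<phi>2 + integral\<^sup>L (lebesgue_on {a..x}) \<psi>2"
    and v2: "AE x in ?M. v2 x = - \<psi>2 x - complex_of_real (w x) * \<phi>2 x"
    using G2 unfolding opL_graph_def L1_def by auto
  have I_diff: "?I (\<lambda>x. \<phi>1 x - \<phi>2 x) = ?I \<phi>1 - ?I \<phi>2"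
    using integrable_bounded_mult[OF q_meas q_bd int1(1)] integrable_bounded_mult[OF q_meas q_bd int2(1)]
    by (simp add: right_diff_distrib)
  have prim_diff: "integral\<^sup>L (lebesgue_on {a..x}) (\<lambda>t. \<psi>1 t - \<psi>2 t)
      = integral\<^sup>L (lebesgue_on {a..x}) \<psi>1 - integral\<^sup>L (lebesgue_on {a..x}) \<psi>2" if "x \<in> {a..b}" for x
    using that by (intro Bochner_Integration.integral_diff integrable_subinterval[OF int1(3)]
        integrable_subinterval[OF int2(3)]) auto
  have "AE x in ?M. complex_of_real (g x) * (\<phi>1 x - \<phi>2 x)
      = ?I (\<lambda>x. \<phi>1 x - \<phi>2 x) + integral\<^sup>L (lebesgue_on {a..x}) (\<lambda>t. \<psi>1 t - \<psi>2 t)"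
    using rep1 rep2 AE_space by eventually_elim (use I_diff prim_diff in \<open>simp add: algebra_simps\<close>)
  moreover have "AE x in ?M. v1 x - v2 x = - (\<psi>1 x - \<psi>2 x) - complex_of_real (w x) * (\<phi>1 x - \<phi>2 x)"
    using v1 v2 by eventually_elim (simp only:, simp add: algebra_simps)
  ultimately show ?thesis
    unfolding opL_graph_def L1_def using int1 int2 by (intro conjI bexI[of _ "\<lambda>t. \<psi>1 t - \<psi>2 t"]) auto
qed

locale resolvent_construction =
  fixes a b :: real and g w q :: "real \<Rightarrow> real" and \<mu> :: real
  assumes a_lt_b: "a < b"
    and g_cont: "continuous_on {a..b} g" and g_pos: "\<And>x. x \<in> {a..b} \<Longrightarrow> g x > 0"
    and w_cont: "continuous_on {a..b} w"
    and q_meas: "q \<in> borel_measurable (lebesgue_on {a..b})"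
    and shift_nonneg: "\<And>x. x \<in> {a..b} \<Longrightarrow> \<mu> + w x \<ge> 0"
    and q_small: "AE x in lebesgue_on {a..b}. 0 \<le> q x \<and> 2 * q x \<le> \<mu> + w x"
begin

lemma q_bounded: obtains B where "AE x in lebesgue_on {a..b}. \<bar>q x\<bar> \<le> B"
proof -
  obtain W where W: "\<And>x. x \<in> {a..b} \<Longrightarrow> norm (w x) \<le> W"
    using continuous_on_compact_bound[OF compact_Icc w_cont] by blast
  have "AE x in lebesgue_on {a..b}. \<bar>q x\<bar> \<le> (\<mu> + W) / 2"
    using q_small AE_space by eventually_elim (use W in force)
  then show ?thesis using that by blast
qed

lemma g_nonzero: "x \<in> {a..b} \<Longrightarrow> g x \<noteq> 0"
  using g_pos by force

lemma g_meas: "g \<in> borel_measurable (lebesgue_on {a..b})"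
  by (rule continuous_imp_measurable_on_sets_lebesgue[OF g_cont]) auto

definition k :: "real \<Rightarrow> real" where "k x = (\<mu> + w x) / g x"

definition K :: "real \<Rightarrow> real" where "K x = integral {a..x} k"

definition e :: "real \<Rightarrow> real" where "e x = exp (- K x)"

definition E :: "real \<Rightarrow> real" where "E x = exp (K x)"

lemma k_cont: "continuous_on {a..b} k"
  unfolding k_def using g_nonzero by (intro continuous_intros w_cont g_cont) auto

lemma k_nonneg: "x \<in> {a..b} \<Longrightarrow> k x \<ge> 0"
  unfolding k_def using shift_nonneg g_pos by (simp add: less_imp_le)

lemma k_integrable_on: "a \<le> s \<Longrightarrow> x \<le> b \<Longrightarrow> k integrable_on {s..x}"
  using integrable_continuous_real[OF k_cont] by (rule integrable_on_subinterval) auto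

lemma K_deriv: "x \<in> {a..b} \<Longrightarrow> (K has_real_derivative k x) (at x within {a..b})"
  unfolding K_def has_real_derivative_iff_has_vector_derivative
  by (rule integral_has_vector_derivative[OF k_cont])

lemma K_cont: "continuous_on {a..b} K"
  unfolding K_def by (rule indefinite_integral_continuous_1) (rule integrable_continuous_real[OF k_cont])

lemma K_a: "K a = 0"
  by (simp add: K_def)

lemma K_mono: "a \<le> x \<Longrightarrow> x \<le> y \<Longrightarrow> y \<le> b \<Longrightarrow> K x \<le> K y"
  unfolding K_def by (rule integral_subset_le) (use k_integrable_on k_nonneg in auto)

lemma K_nonneg: "x \<in> {a..b} \<Longrightarrow> K x \<ge> 0"
  unfolding K_def by (rule integral_nonneg) (use k_integrable_on k_nonneg in auto)

lemma e_cont: "continuous_on {a..b} e"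
  unfolding e_def by (intro continuous_intros K_cont)

lemma E_cont: "continuous_on {a..b} E"
  unfolding E_def by (intro continuous_intros K_cont)

lemma e_meas: "e \<in> borel_measurable (lebesgue_on {a..b})"
  by (rule continuous_imp_measurable_on_sets_lebesgue[OF e_cont]) auto

lemma E_meas: "E \<in> borel_measurable (lebesgue_on {a..b})"
  by (rule continuous_imp_measurable_on_sets_lebesgue[OF E_cont]) auto

lemma e_times_E: "e x * E x = 1"
  by (simp add: e_def E_def exp_minus field_simps)

lemma e_a: "e a = 1" and E_a: "E a = 1"
  by (simp_all add: e_def E_def K_a)

lemma e_pos: "e x > 0" and E_pos: "E x > 0"
  by (simp_all add: e_def E_def)

lemma e_le_1: "x \<in> {a..b} \<Longrightarrow> e x \<le> 1"
  using K_nonneg[of x] by (simp add: e_def)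

lemma E_le_E_b: "x \<in> {a..b} \<Longrightarrow> E x \<le> E b"
  using K_mono[of x b] by (simp add: E_def)

lemma integral_k_e:
  assumes "a \<le> s" "s \<le> x" "x \<le> b"
  shows "integral\<^sup>L (lebesgue_on {s..x}) (\<lambda>t. k t * e t) = e s - e x"
proof -
  have "((\<lambda>t. k t * e t) has_integral ((\<lambda>t. - e t) x - (\<lambda>t. - e t) s)) {s..x}"
  proof (rule fundamental_theorem_of_calculus)
    fix t assume t: "t \<in> {s..x}"
    have "(K has_real_derivative k t) (at t within {s..x})"
      using assms t by (intro DERIV_subset[OF K_deriv]) auto
    then have "((\<lambda>t. - e t) has_real_derivative (k t * e t)) (at t within {s..x})"
      unfolding e_def by (auto intro!: derivative_eq_intros)
    then show "((\<lambda>t. - e t) has_vector_derivative (k t * e t)) (at t within {s..x})"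
      by (simp add: has_real_derivative_iff_has_vector_derivative)
  qed (use assms in auto)
  moreover have "continuous_on {s..x} (\<lambda>t. k t * e t)"
    using assms by (intro continuous_intros continuous_on_subset[OF k_cont] continuous_on_subset[OF e_cont]) auto
  ultimately show ?thesis
    by (simp add: integral_unique lebesgue_integral_eq_integral continuous_imp_integrable_real)
qed

text \<open>The weight of the nonlocal boundary condition when written in terms of g \<phi> / e; its mass
  \<gamma> is at most 1/2 because 2 q \<le> \<mu> + w.\<close>

definition \<rho> :: "real \<Rightarrow> real" where "\<rho> x = q x / g x * e x"

definition \<gamma> :: real where "\<gamma> = integral\<^sup>L (lebesgue_on {a..b}) \<rho>"

lemma \<rho>_meas: "\<rho> \<in> borel_measurable (lebesgue_on {a..b})"
  unfolding \<rho>_def using q_meas g_meas e_meas by measurable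

lemma \<rho>_bounds: "AE x in lebesgue_on {a..b}. 0 \<le> \<rho> x \<and> \<rho> x \<le> k x * e x / 2"
  using q_small AE_space
proof eventually_elim
  case (elim x)
  then have g_x: "g x > 0" using g_pos by simp
  have "0 \<le> q x / g x * e x" using elim g_x e_pos[of x] by simp
  moreover have "q x / g x \<le> k x / 2" using elim g_x by (simp add: k_def field_simps)
  then have "q x / g x * e x \<le> k x / 2 * e x" by (rule mult_right_mono[OF _ less_imp_le[OF e_pos]])
  ultimately show ?case unfolding \<rho>_def by simp
qed

lemma \<rho>_integrable: "integrable (lebesgue_on {a..b}) \<rho>"
proof -
  interpret finite_measure "lebesgue_on {a..b}" by (rule finite_measure_lebesgue_on) auto
  have "continuous_on {a..b} (\<lambda>x. k x * e x / 2)" by (intro continuous_intros k_cont e_cont) simp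
  then obtain B where B: "\<And>x. x \<in> {a..b} \<Longrightarrow> norm (k x * e x / 2) \<le> B"
    using continuous_on_compact_bound[OF compact_Icc] by blast
  show ?thesis
  proof (rule integrable_const_bound[where B=B])
    show "AE x in lebesgue_on {a..b}. norm (\<rho> x) \<le> B"
      using \<rho>_bounds AE_space by eventually_elim (use B in force)
  qed (rule \<rho>_meas)
qed

lemma \<gamma>_bounds: "0 \<le> \<gamma>" "\<gamma> \<le> 1/2"
proof -
  show "0 \<le> \<gamma>" unfolding \<gamma>_def using \<rho>_bounds by (intro integral_nonneg_AE) auto
  have "\<gamma> \<le> integral\<^sup>L (lebesgue_on {a..b}) (\<lambda>x. k x * e x / 2)"
    unfolding \<gamma>_def using \<rho>_bounds
    by (intro integral_mono_AE \<rho>_integrable continuous_imp_integrable_real continuous_intros k_cont e_cont) auto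
  also have "\<dots> = (e a - e b) / 2" using integral_k_e[of a b] a_lt_b by simp
  also have "\<dots> \<le> 1/2" using e_a e_pos[of b] by simp
  finally show "\<gamma> \<le> 1/2" .
qed

definition P :: "(real \<Rightarrow> complex) \<Rightarrow> real \<Rightarrow> complex" where
  "P f x = integral\<^sup>L (lebesgue_on {a..x}) (\<lambda>s. complex_of_real (E s) * f s)"

text \<open>\<kappa> f solves \<kappa> = \<gamma> \<kappa> + \<integral> \<rho> P f, the boundary condition for g \<phi> = e (\<kappa> + P f).\<close>

definition \<kappa> :: "(real \<Rightarrow> complex) \<Rightarrow> complex" where
  "\<kappa> f = integral\<^sup>L (lebesgue_on {a..b}) (\<lambda>x. complex_of_real (\<rho> x) * P f x) / complex_of_real (1 - \<gamma>)"

definition u :: "(real \<Rightarrow> complex) \<Rightarrow> real \<Rightarrow> complex" where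
  "u f x = complex_of_real (e x) * (\<kappa> f + P f x)"

definition resolvent :: "(real \<Rightarrow> complex) \<Rightarrow> real \<Rightarrow> complex" where
  "resolvent f x = u f x / complex_of_real (g x)"

lemma E_mult_integrable:
  assumes "integrable (lebesgue_on {a..b}) f"
  shows "integrable (lebesgue_on {a..b}) (\<lambda>s. complex_of_real (E s) * f s)"
proof (rule Bochner_Integration.integrable_bound[where f="\<lambda>s. complex_of_real (E b) * f s"])
  show "integrable (lebesgue_on {a..b}) (\<lambda>s. complex_of_real (E b) * f s)" using assms by simp
  show "(\<lambda>s. complex_of_real (E s) * f s) \<in> borel_measurable (lebesgue_on {a..b})"
    using assms E_meas by measurable
  show "AE x in lebesgue_on {a..b}. norm (complex_of_real (E x) * f x) \<le> norm (complex_of_real (E b) * f x)"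
    using E_le_E_b E_pos by (intro AE_I2) (auto simp: norm_mult abs_of_pos intro!: mult_right_mono)
qed

lemma P_cont: "integrable (lebesgue_on {a..b}) f \<Longrightarrow> continuous_on {a..b} (P f)"
  unfolding P_def by (rule indefinite_integral_continuous_real[OF E_mult_integrable])

lemma P_bound:
  assumes f: "integrable (lebesgue_on {a..b}) f" and x: "x \<in> {a..b}"
  shows "norm (P f x) \<le> E b * L1norm a b f"
proof -
  have "norm (P f x) \<le> integral\<^sup>L (lebesgue_on {a..b}) (\<lambda>s. norm (complex_of_real (E s) * f s))"
    unfolding P_def using norm_integral_subinterval_le[OF E_mult_integrable[OF f], of x] x by auto
  also have "\<dots> \<le> integral\<^sup>L (lebesgue_on {a..b}) (\<lambda>s. E b * norm (f s))"
    using f E_le_E_b E_pos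
    by (intro integral_mono integrable_norm E_mult_integrable) (auto simp: norm_mult abs_of_pos intro!: mult_right_mono)
  also have "\<dots> = E b * L1norm a b f" by (simp add: L1norm_def)
  finally show ?thesis .
qed

lemma \<rho>_P_integrable:
  assumes f: "integrable (lebesgue_on {a..b}) f"
  shows "integrable (lebesgue_on {a..b}) (\<lambda>x. complex_of_real (\<rho> x) * P f x)"
proof -
  have "P f \<in> borel_measurable (lebesgue_on {a..b})"
    by (rule continuous_imp_measurable_on_sets_lebesgue[OF P_cont[OF f]]) auto
  then have meas: "(\<lambda>x. complex_of_real (\<rho> x) * P f x) \<in> borel_measurable (lebesgue_on {a..b})"
    using \<rho>_meas by measurable
  have bound: "AE x in lebesgue_on {a..b}.
      norm (complex_of_real (\<rho> x) * P f x) \<le> norm (complex_of_real (\<rho> x * (E b * L1norm a b f)))"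
    using \<rho>_bounds AE_space
  proof eventually_elim
    case (elim x)
    then have "\<rho> x * norm (P f x) \<le> \<rho> x * (E b * L1norm a b f)"
      using P_bound[OF f, of x] by (intro mult_left_mono) auto
    then show ?case
      using elim E_pos[of b] L1norm_nonneg[of a b f] by (simp add: norm_mult)
  qed
  have "integrable (lebesgue_on {a..b}) (\<lambda>x. complex_of_real (\<rho> x * (E b * L1norm a b f)))"
    using \<rho>_integrable by simp
  then show ?thesis using meas bound by (rule Bochner_Integration.integrable_bound)
qed

lemma \<kappa>_bound:
  assumes f: "integrable (lebesgue_on {a..b}) f"
  shows "norm (\<kappa> f) \<le> E b * L1norm a b f"
proof -
  let ?M = "lebesgue_on {a..b}" and ?B = "E b * L1norm a b f"
  have B_nonneg: "0 \<le> ?B" using E_pos[of b] L1norm_nonneg[of a b f] by simp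
  have "norm (integral\<^sup>L ?M (\<lambda>x. complex_of_real (\<rho> x) * P f x))
      \<le> integral\<^sup>L ?M (\<lambda>x. norm (complex_of_real (\<rho> x) * P f x))"
    by (rule integral_norm_bound)
  also have "\<dots> \<le> integral\<^sup>L ?M (\<lambda>x. \<rho> x * ?B)"
  proof (rule integral_mono_AE)
    show "integrable ?M (\<lambda>x. norm (complex_of_real (\<rho> x) * P f x))" using \<rho>_P_integrable[OF f] by auto
    show "integrable ?M (\<lambda>x. \<rho> x * ?B)" using \<rho>_integrable by auto
    show "AE x in ?M. norm (complex_of_real (\<rho> x) * P f x) \<le> \<rho> x * ?B"
      using \<rho>_bounds AE_space
      by eventually_elim (use P_bound[OF f] in \<open>auto simp: norm_mult intro!: mult_left_mono\<close>)
  qed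
  also have "\<dots> = \<gamma> * ?B" by (simp add: \<gamma>_def)
  also have "\<dots> \<le> (1 - \<gamma>) * ?B" using \<gamma>_bounds B_nonneg by (intro mult_right_mono) auto
  finally have "norm (integral\<^sup>L ?M (\<lambda>x. complex_of_real (\<rho> x) * P f x)) \<le> (1 - \<gamma>) * ?B" .
  moreover have "0 < 1 - \<gamma>" using \<gamma>_bounds by simp
  ultimately show ?thesis
    unfolding \<kappa>_def norm_divide norm_of_real by (simp add: pos_divide_le_eq mult.commute)
qed

lemma u_cont: "integrable (lebesgue_on {a..b}) f \<Longrightarrow> continuous_on {a..b} (u f)"
  unfolding u_def by (intro continuous_intros e_cont P_cont)

lemma resolvent_cont: "integrable (lebesgue_on {a..b}) f \<Longrightarrow> continuous_on {a..b} (resolvent f)"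
  unfolding resolvent_def using g_nonzero by (intro continuous_intros u_cont g_cont) auto

text \<open>By Fubini both sides equal \<integral>[a,x] (e s - e x) E s f s ds.\<close>

lemma integral_k_e_P:
  assumes f: "integrable (lebesgue_on {a..b}) f" and x: "x \<in> {a..b}"
  shows "integral\<^sup>L (lebesgue_on {a..x}) (\<lambda>t. complex_of_real (k t * e t) * P f t)
       = integral\<^sup>L (lebesgue_on {a..x}) f - complex_of_real (e x) * P f x"
proof -
  have sub: "{a..x} \<subseteq> {a..b}" using x by auto
  have f_x: "integrable (lebesgue_on {a..x}) f"
    and Ef_x: "integrable (lebesgue_on {a..x}) (\<lambda>s. complex_of_real (E s) * f s)"
    using integrable_subinterval[OF f sub] integrable_subinterval[OF E_mult_integrable[OF f] sub] .
  have "continuous_on {a..x} (\<lambda>t. k t * e t)"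
    by (intro continuous_intros continuous_on_subset[OF k_cont sub] continuous_on_subset[OF e_cont sub])
  then have "integral\<^sup>L (lebesgue_on {a..x}) (\<lambda>t. complex_of_real (k t * e t) * P f t)
      = integral\<^sup>L (lebesgue_on {a..x})
          (\<lambda>s. complex_of_real (integral\<^sup>L (lebesgue_on {s..x}) (\<lambda>t. k t * e t)) * (complex_of_real (E s) * f s))"
    unfolding P_def by (rule integral_mult_primitive_swap[OF Ef_x])
  also have "\<dots> = integral\<^sup>L (lebesgue_on {a..x}) (\<lambda>s. f s - complex_of_real (e x) * (complex_of_real (E s) * f s))"
  proof (rule Bochner_Integration.integral_cong)
    fix s assume "s \<in> space (lebesgue_on {a..x})"
    then have "integral\<^sup>L (lebesgue_on {s..x}) (\<lambda>t. k t * e t) = e s - e x"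
      using x by (intro integral_k_e) auto
    moreover have "complex_of_real (e s) * complex_of_real (E s) = 1"
      using e_times_E[of s] by (simp flip: of_real_mult)
    moreover have "complex_of_real (e s - e x) * (complex_of_real (E s) * f s)
        = complex_of_real (e s) * complex_of_real (E s) * f s - complex_of_real (e x) * (complex_of_real (E s) * f s)"
      by (simp add: algebra_simps)
    ultimately show "complex_of_real (integral\<^sup>L (lebesgue_on {s..x}) (\<lambda>t. k t * e t)) * (complex_of_real (E s) * f s)
        = f s - complex_of_real (e x) * (complex_of_real (E s) * f s)"
      by simp
  qed simp
  also have "\<dots> = integral\<^sup>L (lebesgue_on {a..x}) f - complex_of_real (e x) * P f x"
    using f_x Ef_x by (simp add: P_def)
  finally show ?thesis .
qed

lemma u_integral_equation:
  assumes f: "integrable (lebesgue_on {a..b}) f" and x: "x \<in> {a..b}"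
  shows "u f x = \<kappa> f + integral\<^sup>L (lebesgue_on {a..x}) (\<lambda>t. f t - complex_of_real (k t) * u f t)"
proof -
  have sub: "{a..x} \<subseteq> {a..b}" using x by auto
  have ke_cont: "continuous_on {a..x} (\<lambda>t. complex_of_real (k t * e t))"
    by (intro continuous_intros continuous_on_subset[OF k_cont sub] continuous_on_subset[OF e_cont sub])
  have keP_int: "integrable (lebesgue_on {a..x}) (\<lambda>t. complex_of_real (k t * e t) * P f t)"
    by (intro continuous_imp_integrable_real continuous_intros ke_cont continuous_on_subset[OF P_cont[OF f] sub])
  have ke_int: "integrable (lebesgue_on {a..x}) (\<lambda>t. \<kappa> f * complex_of_real (k t * e t))"
    using continuous_imp_integrable_real[OF ke_cont] by simp
  have "integral\<^sup>L (lebesgue_on {a..x}) (\<lambda>t. complex_of_real (k t) * u f t)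
      = integral\<^sup>L (lebesgue_on {a..x}) (\<lambda>t. \<kappa> f * complex_of_real (k t * e t))
        + integral\<^sup>L (lebesgue_on {a..x}) (\<lambda>t. complex_of_real (k t * e t) * P f t)"
    by (subst Bochner_Integration.integral_add[OF ke_int keP_int, symmetric]) (simp add: u_def algebra_simps)
  also have "\<dots> = \<kappa> f * complex_of_real (1 - e x) + (integral\<^sup>L (lebesgue_on {a..x}) f - complex_of_real (e x) * P f x)"
    using integral_k_e[of a x] integral_k_e_P[OF f x] x e_a by (simp del: of_real_mult)
  finally have "integral\<^sup>L (lebesgue_on {a..x}) (\<lambda>t. complex_of_real (k t) * u f t) = \<dots>" .
  moreover have "integrable (lebesgue_on {a..x}) (\<lambda>t. complex_of_real (k t) * u f t)"
    using ke_int keP_int by (simp add: u_def algebra_simps)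
  ultimately show ?thesis
    using integrable_subinterval[OF f sub] by (simp add: u_def algebra_simps)
qed

lemma resolvent_boundary_condition:
  assumes f: "integrable (lebesgue_on {a..b}) f"
  shows "integral\<^sup>L (lebesgue_on {a..b}) (\<lambda>t. complex_of_real (q t) * resolvent f t) = \<kappa> f"
proof -
  let ?M = "lebesgue_on {a..b}"
  have "integral\<^sup>L ?M (\<lambda>t. complex_of_real (q t) * resolvent f t)
      = integral\<^sup>L ?M (\<lambda>t. \<kappa> f * complex_of_real (\<rho> t) + complex_of_real (\<rho> t) * P f t)"
    by (intro Bochner_Integration.integral_cong)
      (auto simp: resolvent_def u_def \<rho>_def field_simps g_nonzero)
  also have "\<dots> = \<kappa> f * complex_of_real \<gamma> + integral\<^sup>L ?M (\<lambda>t. complex_of_real (\<rho> t) * P f t)"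
    using \<rho>_integrable \<rho>_P_integrable[OF f] by (simp add: \<gamma>_def)
  also have "integral\<^sup>L ?M (\<lambda>t. complex_of_real (\<rho> t) * P f t) = \<kappa> f * complex_of_real (1 - \<gamma>)"
    using \<gamma>_bounds by (simp add: \<kappa>_def)
  finally show ?thesis by (simp add: algebra_simps)
qed

lemma resolvent_in_graph:
  assumes f: "f \<in> L1 a b"
  shows "opL_graph a b g w q (resolvent f) (\<lambda>x. complex_of_real \<mu> * resolvent f x - f x)"
proof -
  let ?M = "lebesgue_on {a..b}"
  have f_int: "integrable ?M f" using f by (simp add: L1_def)
  define \<psi> where "\<psi> = (\<lambda>x. f x - complex_of_real (k x) * u f x)"
  have res_int: "integrable ?M (resolvent f)"
    by (rule continuous_imp_integrable_real[OF resolvent_cont[OF f_int]])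
  have "integrable ?M (\<lambda>x. complex_of_real (k x) * u f x)"
    by (intro continuous_imp_integrable_real continuous_intros k_cont u_cont f_int)
  then have \<psi>_int: "integrable ?M \<psi>" unfolding \<psi>_def using f_int by auto
  have "complex_of_real (g x) * resolvent f x =
      integral\<^sup>L ?M (\<lambda>t. complex_of_real (q t) * resolvent f t) + integral\<^sup>L (lebesgue_on {a..x}) \<psi>"
    if "x \<in> {a..b}" for x
    using that u_integral_equation[OF f_int that] resolvent_boundary_condition[OF f_int] g_nonzero[OF that]
    by (simp add: resolvent_def \<psi>_def)
  moreover have "complex_of_real \<mu> * resolvent f x - f x = - \<psi> x - complex_of_real (w x) * resolvent f x"
    if "x \<in> {a..b}" for x
    using g_nonzero[OF that] by (simp add: \<psi>_def resolvent_def k_def field_simps)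
  ultimately show ?thesis
    unfolding opL_graph_def using f res_int \<psi>_int
    by (intro conjI bexI[of _ \<psi>] AE_I2) (auto simp: L1_def)
qed

lemma resolvent_bounded: "\<exists>C. \<forall>f\<in>L1 a b. L1norm a b (resolvent f) \<le> C * L1norm a b f"
proof -
  obtain m where m: "m > 0" "\<And>x. x \<in> {a..b} \<Longrightarrow> m \<le> g x"
    using continuous_on_Icc_positive_lower_bound[OF g_cont g_pos] by blast
  have "L1norm a b (resolvent f) \<le> (2 * E b / m * (b - a)) * L1norm a b f" if f: "f \<in> L1 a b" for f
  proof -
    have f_int: "integrable (lebesgue_on {a..b}) f" using f by (simp add: L1_def)
    have "norm (resolvent f x) \<le> 2 * E b * L1norm a b f / m" if x: "x \<in> {a..b}" for x
    proof -
      have "norm (u f x) \<le> 1 * (2 * E b * L1norm a b f)"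
        unfolding u_def norm_mult using e_pos[of x] e_le_1[OF x]
          \<kappa>_bound[OF f_int] P_bound[OF f_int x] norm_triangle_ineq[of "\<kappa> f" "P f x"]
        by (intro mult_mono) auto
      then show ?thesis
        using m(1) m(2)[OF x] g_pos[OF x] E_pos[of b] L1norm_nonneg[of a b f]
        by (simp add: resolvent_def norm_divide frac_le)
    qed
    then have "L1norm a b (resolvent f) \<le> 2 * E b * L1norm a b f / m * (b - a)"
      using a_lt_b by (intro L1norm_le_of_bounded_continuous resolvent_cont f_int) auto
    then show ?thesis by (simp add: field_simps)
  qed
  then show ?thesis by blast
qed

lemma kernel_flux_equation:
  assumes G: "opL_graph a b g w q \<phi> v" and v: "AE x in lebesgue_on {a..b}. v x = complex_of_real \<mu> * \<phi> x"
  obtains U where "continuous_on {a..b} U"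
    and "\<And>x. x \<in> {a..b} \<Longrightarrow> U x = U a - integral {a..x} (\<lambda>t. complex_of_real (k t) * U t)"
    and "AE x in lebesgue_on {a..b}. complex_of_real (g x) * \<phi> x = U x"
    and "U a = integral\<^sup>L (lebesgue_on {a..b}) (\<lambda>t. complex_of_real (q t) * \<phi> t)"
proof -
  let ?M = "lebesgue_on {a..b}"
  obtain \<psi> where \<psi>_int: "integrable ?M \<psi>"
    and rep: "AE x in ?M. complex_of_real (g x) * \<phi> x
      = integral\<^sup>L ?M (\<lambda>t. complex_of_real (q t) * \<phi> t) + integral\<^sup>L (lebesgue_on {a..x}) \<psi>"
    and v_eq: "AE x in ?M. v x = - \<psi> x - complex_of_real (w x) * \<phi> x"
    using G unfolding opL_graph_def L1_def by auto
  define U where "U x = integral\<^sup>L ?M (\<lambda>t. complex_of_real (q t) * \<phi> t) + integral\<^sup>L (lebesgue_on {a..x}) \<psi>" for x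
  have U_cont: "continuous_on {a..b} U"
    unfolding U_def by (intro continuous_intros indefinite_integral_continuous_real[OF \<psi>_int])
  have U_a: "U a = integral\<^sup>L ?M (\<lambda>t. complex_of_real (q t) * \<phi> t)"
    unfolding U_def using lebesgue_integral_eq_integral_subinterval[OF \<psi>_int, of a] a_lt_b by simp
  have gU: "AE x in ?M. complex_of_real (g x) * \<phi> x = U x" using rep by (simp add: U_def)
  have "AE x in ?M. \<psi> x = - complex_of_real (k x) * U x"
    using gU v_eq v AE_space
  proof eventually_elim
    case (elim x)
    have "\<psi> x = - v x - complex_of_real (w x) * \<phi> x" using elim(2) by simp
    also have "\<dots> = - (complex_of_real \<mu> + complex_of_real (w x)) * \<phi> x"
      using elim(3) by (simp add: algebra_simps)
    also have "\<dots> = - complex_of_real (k x) * (complex_of_real (g x) * \<phi> x)"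
      using g_nonzero[of x] elim(4) by (simp add: k_def field_simps)
    finally show ?case using elim(1) by simp
  qed
  then have "U x = U a - integral {a..x} (\<lambda>t. complex_of_real (k t) * U t)" if x: "x \<in> {a..b}" for x
  proof -
    have kU_int: "integrable ?M (\<lambda>t. - complex_of_real (k t) * U t)"
      by (intro continuous_imp_integrable_real continuous_intros k_cont U_cont)
    have "integral\<^sup>L (lebesgue_on {a..x}) \<psi> = integral\<^sup>L (lebesgue_on {a..x}) (\<lambda>t. - complex_of_real (k t) * U t)"
      using \<psi>_int kU_int \<open>AE x in ?M. \<psi> x = _\<close> x by (intro integral_lebesgue_on_subinterval_cong_AE) auto
    also have "\<dots> = - integral {a..x} (\<lambda>t. complex_of_real (k t) * U t)"
      using lebesgue_integral_eq_integral_subinterval[OF kU_int, of x] x by simp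
    finally show ?thesis by (simp add: U_def[of x] U_a)
  qed
  then show ?thesis using that U_cont gU U_a by blast
qed

text \<open>The product E U has derivative zero.\<close>

lemma integral_equation_unique:
  assumes U_cont: "continuous_on {a..b} U"
    and U_eq: "\<And>x. x \<in> {a..b} \<Longrightarrow> U x = U a - integral {a..x} (\<lambda>t. complex_of_real (k t) * U t)"
    and x: "x \<in> {a..b}"
  shows "U x = U a * complex_of_real (e x)"
proof -
  have kU_cont: "continuous_on {a..b} (\<lambda>t. complex_of_real (k t) * U t)"
    by (intro continuous_intros k_cont U_cont)
  have U_deriv: "(U has_vector_derivative (- (complex_of_real (k y) * U y))) (at y within {a..b})"
    if y: "y \<in> {a..b}" for y
  proof (rule has_vector_derivative_transform[OF y _ _])
    have prim_deriv: "((\<lambda>y. integral {a..y} (\<lambda>t. complex_of_real (k t) * U t))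
        has_vector_derivative (complex_of_real (k y) * U y)) (at y within {a..b})"
      by (rule integral_has_vector_derivative[OF kU_cont y])
    show "((\<lambda>y. U a - integral {a..y} (\<lambda>t. complex_of_real (k t) * U t))
        has_vector_derivative (- (complex_of_real (k y) * U y))) (at y within {a..b})"
      using has_vector_derivative_diff[OF has_vector_derivative_const prim_deriv] by simp
  qed (rule U_eq)
  have E_deriv: "(E has_real_derivative (E y * k y)) (at y within {a..b})" if "y \<in> {a..b}" for y
    unfolding E_def using K_deriv[OF that] by (auto intro!: derivative_eq_intros)
  obtain z where z: "\<And>y. y \<in> {a..b} \<Longrightarrow> E y *\<^sub>R U y = z"
  proof (rule has_vector_derivative_zero_constant[of "{a..b}" "\<lambda>y. E y *\<^sub>R U y"])
    fix y assume y: "y \<in> {a..b}"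
    show "((\<lambda>y. E y *\<^sub>R U y) has_vector_derivative 0) (at y within {a..b})"
      using has_vector_derivative_scaleR[OF E_deriv[OF y] U_deriv[OF y]]
      by (simp add: scaleR_conv_of_real algebra_simps)
  qed auto
  then have "complex_of_real (E x) * U x = U a"
    using x a_lt_b z[of a] E_a by (simp add: scaleR_conv_of_real)
  then show ?thesis
    using e_times_E[of x] by (simp add: field_simps e_def E_def exp_minus)
qed

lemma kernel_trivial:
  assumes G: "opL_graph a b g w q \<phi> v" and v: "AE x in lebesgue_on {a..b}. v x = complex_of_real \<mu> * \<phi> x"
  shows "AE x in lebesgue_on {a..b}. \<phi> x = 0"
proof -
  let ?M = "lebesgue_on {a..b}"
  obtain U where U_cont: "continuous_on {a..b} U"
    and U_eq: "\<And>x. x \<in> {a..b} \<Longrightarrow> U x = U a - integral {a..x} (\<lambda>t. complex_of_real (k t) * U t)"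
    and gU: "AE x in ?M. complex_of_real (g x) * \<phi> x = U x"
    and U_a: "U a = integral\<^sup>L ?M (\<lambda>t. complex_of_real (q t) * \<phi> t)"
    using kernel_flux_equation[OF G v] by blast
  have U_e: "U x = U a * complex_of_real (e x)" if "x \<in> {a..b}" for x
    using integral_equation_unique[OF U_cont U_eq that] .
  have \<phi>_int: "integrable ?M \<phi>" using G by (simp add: opL_graph_def L1_def)
  obtain B where q_bd: "AE x in ?M. \<bar>q x\<bar> \<le> B" using q_bounded by blast
  have "integral\<^sup>L ?M (\<lambda>t. complex_of_real (q t) * \<phi> t) = integral\<^sup>L ?M (\<lambda>t. U a * complex_of_real (\<rho> t))"
  proof (rule integral_cong_AE)
    show "(\<lambda>t. complex_of_real (q t) * \<phi> t) \<in> borel_measurable ?M"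
      using integrable_bounded_mult[OF q_meas q_bd \<phi>_int] by auto
    show "(\<lambda>t. U a * complex_of_real (\<rho> t)) \<in> borel_measurable ?M" using \<rho>_meas by measurable
    show "AE x in ?M. complex_of_real (q x) * \<phi> x = U a * complex_of_real (\<rho> x)"
      using gU AE_space
    proof eventually_elim
      case (elim x)
      then have "\<phi> x = U a * complex_of_real (e x) / complex_of_real (g x)"
        using U_e[of x] g_nonzero[of x] by (simp add: field_simps)
      then show ?case by (simp add: \<rho>_def)
    qed
  qed
  then have "U a = U a * complex_of_real \<gamma>" using U_a by (simp add: \<gamma>_def)
  then have U_a_0: "U a = 0" using \<gamma>_bounds by (auto simp: algebra_simps)
  show ?thesis
    using gU AE_space by eventually_elim (use U_e U_a_0 g_nonzero in auto)
qed

lemma shifted_injective: "shifted_injective a b g w q (complex_of_real \<mu>)"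
  unfolding shifted_injective_def
proof (intro allI impI, elim conjE)
  fix \<phi>1 v1 \<phi>2 v2
  assume G1: "opL_graph a b g w q \<phi>1 v1" and G2: "opL_graph a b g w q \<phi>2 v2"
    and eq: "aeq a b (\<lambda>x. complex_of_real \<mu> * \<phi>1 x - v1 x) (\<lambda>x. complex_of_real \<mu> * \<phi>2 x - v2 x)"
  obtain B where q_bd: "AE x in lebesgue_on {a..b}. \<bar>q x\<bar> \<le> B" using q_bounded by blast
  have "AE x in lebesgue_on {a..b}. v1 x - v2 x = complex_of_real \<mu> * (\<phi>1 x - \<phi>2 x)"
    using eq unfolding aeq_def by eventually_elim (simp add: algebra_simps)
  with opL_graph_diff[OF q_meas q_bd G1 G2] have "AE x in lebesgue_on {a..b}. \<phi>1 x - \<phi>2 x = 0"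
    by (rule kernel_trivial)
  then show "aeq a b \<phi>1 \<phi>2" unfolding aeq_def by eventually_elim simp
qed

lemma in_resolvent_set: "complex_of_real \<mu> \<in> resolvent_set a b g w q"
proof -
  have "resolvent_inverse a b g w q (complex_of_real \<mu>) resolvent"
    unfolding resolvent_inverse_def aeq_def
  proof
    fix f assume "f \<in> L1 a b"
    then show "\<exists>v. opL_graph a b g w q (resolvent f) v \<and>
        (AE x in lebesgue_on {a..b}. complex_of_real \<mu> * resolvent f x - v x = f x)"
      using resolvent_in_graph by (intro exI[of _ "\<lambda>x. complex_of_real \<mu> * resolvent f x - f x"]) auto
  qed
  then show ?thesis
    unfolding resolvent_set_def bounded_L1_map_def using shifted_injective resolvent_bounded by blast
qed

end

section \<open>Compactness of the resolvent\<close>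

lemma resolvent_set_nonempty:
  fixes a b :: real and g w q :: "real \<Rightarrow> real"
  assumes "a < b" and "continuous_on {a..b} g" and "\<And>x. x \<in> {a..b} \<Longrightarrow> g x > 0"
    and w_cont: "continuous_on {a..b} w"
    and "q \<in> borel_measurable (lebesgue_on {a..b})"
    and q_bd: "AE x in lebesgue_on {a..b}. \<bar>q x\<bar> \<le> Q"
    and q_nonneg: "AE x in lebesgue_on {a..b}. q x \<ge> 0"
  shows "resolvent_set a b g w q \<noteq> {}"
proof -
  obtain W where W: "\<And>x. x \<in> {a..b} \<Longrightarrow> \<bar>w x\<bar> \<le> W"
    using continuous_on_compact_bound[OF compact_Icc w_cont] by (metis real_norm_def)
  have "resolvent_construction a b g w q (W + 2 * max Q 0)"
  proof
    show "x \<in> {a..b} \<Longrightarrow> 0 \<le> W + 2 * max Q 0 + w x" for x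
      using W[of x] by linarith
    show "AE x in lebesgue_on {a..b}. 0 \<le> q x \<and> 2 * q x \<le> W + 2 * max Q 0 + w x"
      using q_bd q_nonneg AE_space by eventually_elim (use W in force)
  qed (use assms in auto)
  then show ?thesis using resolvent_construction.in_resolvent_set by blast
qed

lemma resolvent_inverse_bounded:
  assumes \<mu>: "\<mu> \<in> resolvent_set a b g w q" and R: "resolvent_inverse a b g w q \<mu> R"
  shows "\<exists>C. \<forall>f\<in>L1 a b. L1norm a b (R f) \<le> C * L1norm a b f"
proof -
  obtain R0 C where R0: "resolvent_inverse a b g w q \<mu> R0"
    and C: "\<forall>f\<in>L1 a b. L1norm a b (R0 f) \<le> C * L1norm a b f"
    using \<mu> by (auto simp: resolvent_set_def bounded_L1_map_def)
  have "L1norm a b (R f) = L1norm a b (R0 f)" if f: "f \<in> L1 a b" for f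
  proof -
    obtain v v0 where v: "opL_graph a b g w q (R f) v" "aeq a b (\<lambda>x. \<mu> * R f x - v x) f"
      and v0: "opL_graph a b g w q (R0 f) v0" "aeq a b (\<lambda>x. \<mu> * R0 f x - v0 x) f"
      using R R0 f unfolding resolvent_inverse_def by blast
    have "aeq a b (\<lambda>x. \<mu> * R f x - v x) (\<lambda>x. \<mu> * R0 f x - v0 x)"
      using v(2) v0(2) unfolding aeq_def by eventually_elim simp
    then have "aeq a b (R f) (R0 f)"
      using \<mu> v(1) v0(1) unfolding resolvent_set_def shifted_injective_def by blast
    then show ?thesis
      using v(1) v0(1) by (intro L1norm_cong_AE) (auto simp: opL_graph_def)
  qed
  then show ?thesis using C by auto
qed

lemma resolvent_image_primitive_bound:
  assumes G: "opL_graph a b g w q \<phi> v" and f: "aeq a b (\<lambda>x. \<mu> * \<phi> x - v x) f" "f \<in> L1 a b"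
    and W: "\<And>x. x \<in> {a..b} \<Longrightarrow> \<bar>w x\<bar> \<le> W"
  obtains \<psi> where "\<psi> \<in> L1 a b"
    and "AE x in lebesgue_on {a..b}. complex_of_real (g x) * \<phi> x
      = integral\<^sup>L (lebesgue_on {a..b}) (\<lambda>t. complex_of_real (q t) * \<phi> t) + integral\<^sup>L (lebesgue_on {a..x}) \<psi>"
    and "L1norm a b \<psi> \<le> L1norm a b f + (norm \<mu> + W) * L1norm a b \<phi>"
proof -
  let ?M = "lebesgue_on {a..b}"
  obtain \<psi> where \<psi>: "\<psi> \<in> L1 a b" and \<phi>: "\<phi> \<in> L1 a b"
    and rep: "AE x in ?M. complex_of_real (g x) * \<phi> x
      = integral\<^sup>L ?M (\<lambda>t. complex_of_real (q t) * \<phi> t) + integral\<^sup>L (lebesgue_on {a..x}) \<psi>"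
    and v: "AE x in ?M. v x = - \<psi> x - complex_of_real (w x) * \<phi> x"
    using G unfolding opL_graph_def by blast
  have "L1norm a b \<psi> \<le> integral\<^sup>L ?M (\<lambda>x. norm (f x) + (norm \<mu> + W) * norm (\<phi> x))"
    unfolding L1norm_def
  proof (rule integral_mono_AE)
    show "integrable ?M (\<lambda>x. norm (\<psi> x))" using \<psi> by (simp add: L1_def)
    show "integrable ?M (\<lambda>x. norm (f x) + (norm \<mu> + W) * norm (\<phi> x))" using f(2) \<phi> by (simp add: L1_def)
    show "AE x in ?M. norm (\<psi> x) \<le> norm (f x) + (norm \<mu> + W) * norm (\<phi> x)"
      using v f(1)[unfolded aeq_def] AE_space
    proof eventually_elim
      case (elim x)
      have \<psi>_x: "\<psi> x = (f x - \<mu> * \<phi> x) - complex_of_real (w x) * \<phi> x"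
        using elim(1,2) by algebra
      have "norm (\<psi> x) \<le> norm (f x - \<mu> * \<phi> x) + norm (complex_of_real (w x) * \<phi> x)"
        unfolding \<psi>_x by (rule norm_triangle_ineq4)
      also have "norm (f x - \<mu> * \<phi> x) \<le> norm (f x) + norm \<mu> * norm (\<phi> x)"
        using norm_triangle_ineq4[of "f x" "\<mu> * \<phi> x"] by (simp add: norm_mult)
      also have "norm (complex_of_real (w x) * \<phi> x) \<le> W * norm (\<phi> x)"
        using W elim(3) by (simp add: norm_mult mult_right_mono)
      finally have "norm (\<psi> x) \<le> norm (f x) + norm \<mu> * norm (\<phi> x) + W * norm (\<phi> x)" by simp
      then show ?case by (simp add: algebra_simps)
    qed
  qed
  also have "\<dots> = L1norm a b f + (norm \<mu> + W) * L1norm a b \<phi>"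
    using f(2) \<phi> by (simp add: L1norm_def L1_def)
  finally show ?thesis using that \<psi> rep by blast
qed

lemma resolvent_image_representation:
  fixes g w q :: "real \<Rightarrow> real"
  assumes R: "resolvent_inverse a b g w q \<mu> R"
    and C: "\<And>f. f \<in> L1 a b \<Longrightarrow> L1norm a b (R f) \<le> C * L1norm a b f"
    and f: "f \<in> L1 a b" "L1norm a b f \<le> B"
    and W: "\<And>x. x \<in> {a..b} \<Longrightarrow> \<bar>w x\<bar> \<le> W"
    and q_meas: "q \<in> borel_measurable (lebesgue_on {a..b})"
    and q_bd: "AE x in lebesgue_on {a..b}. \<bar>q x\<bar> \<le> Q"
  shows "\<exists>\<psi>. R f \<in> L1 a b \<and> \<psi> \<in> L1 a b
    \<and> (AE x in lebesgue_on {a..b}. complex_of_real (g x) * R f x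
      = integral\<^sup>L (lebesgue_on {a..b}) (\<lambda>t. complex_of_real (q t) * R f t) + integral\<^sup>L (lebesgue_on {a..x}) \<psi>)
    \<and> L1norm a b \<psi> \<le> B + (norm \<mu> + \<bar>W\<bar> + \<bar>Q\<bar>) * (\<bar>C\<bar> * B)
    \<and> norm (integral\<^sup>L (lebesgue_on {a..b}) (\<lambda>t. complex_of_real (q t) * R f t))
      \<le> B + (norm \<mu> + \<bar>W\<bar> + \<bar>Q\<bar>) * (\<bar>C\<bar> * B)"
proof -
  let ?K = "norm \<mu> + \<bar>W\<bar> + \<bar>Q\<bar>"
  obtain v where v: "opL_graph a b g w q (R f) v" "aeq a b (\<lambda>x. \<mu> * R f x - v x) f"
    using R f(1) unfolding resolvent_inverse_def by blast
  then have Rf: "R f \<in> L1 a b" by (simp add: opL_graph_def)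
  have B_nonneg: "0 \<le> B" using f(2) L1norm_nonneg order.trans by blast
  have "L1norm a b (R f) \<le> C * L1norm a b f" using C f(1) by blast
  also have "\<dots> \<le> \<bar>C\<bar> * L1norm a b f" by (intro mult_right_mono L1norm_nonneg) simp
  also have "\<dots> \<le> \<bar>C\<bar> * B" using f(2) by (intro mult_left_mono) auto
  finally have Rf_bd: "L1norm a b (R f) \<le> \<bar>C\<bar> * B" .
  obtain \<psi> where \<psi>: "\<psi> \<in> L1 a b"
    and rep: "AE x in lebesgue_on {a..b}. complex_of_real (g x) * R f x
      = integral\<^sup>L (lebesgue_on {a..b}) (\<lambda>t. complex_of_real (q t) * R f t) + integral\<^sup>L (lebesgue_on {a..x}) \<psi>"
    and \<psi>_bd: "L1norm a b \<psi> \<le> L1norm a b f + (norm \<mu> + W) * L1norm a b (R f)"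
    using resolvent_image_primitive_bound[OF v f(1) W] by blast
  have "(norm \<mu> + W) * L1norm a b (R f) \<le> ?K * (\<bar>C\<bar> * B)"
    using Rf_bd by (intro mult_mono L1norm_nonneg) auto
  then have "L1norm a b \<psi> \<le> B + ?K * (\<bar>C\<bar> * B)" using \<psi>_bd f(2) by linarith
  moreover have "norm (integral\<^sup>L (lebesgue_on {a..b}) (\<lambda>t. complex_of_real (q t) * R f t))
      \<le> B + ?K * (\<bar>C\<bar> * B)"
  proof -
    have "AE x in lebesgue_on {a..b}. \<bar>q x\<bar> \<le> \<bar>Q\<bar>" using q_bd by eventually_elim simp
    then have "norm (integral\<^sup>L (lebesgue_on {a..b}) (\<lambda>t. complex_of_real (q t) * R f t))
        \<le> \<bar>Q\<bar> * L1norm a b (R f)"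
      using Rf unfolding L1_def by (intro norm_integral_bounded_mult_le[OF q_meas]) auto
    also have "\<dots> \<le> ?K * (\<bar>C\<bar> * B)" using Rf_bd by (intro mult_mono L1norm_nonneg) auto
    finally show ?thesis using B_nonneg by linarith
  qed
  ultimately show ?thesis using Rf \<psi> rep by blast
qed

lemma resolvent_compact:
  fixes g w q :: "real \<Rightarrow> real"
  assumes a_b: "a \<le> b" and g_cont: "continuous_on {a..b} g" and g_pos: "\<And>x. x \<in> {a..b} \<Longrightarrow> g x > 0"
    and w_cont: "continuous_on {a..b} w"
    and q_meas: "q \<in> borel_measurable (lebesgue_on {a..b})"
    and q_bd: "AE x in lebesgue_on {a..b}. \<bar>q x\<bar> \<le> Q"
    and \<mu>: "\<mu> \<in> resolvent_set a b g w q" and R: "resolvent_inverse a b g w q \<mu> R"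
  shows "compact_L1_map a b R"
  unfolding compact_L1_map_def
proof (intro allI impI)
  fix F :: "nat \<Rightarrow> real \<Rightarrow> complex" and B :: real
  assume F: "\<forall>n. F n \<in> L1 a b \<and> L1norm a b (F n) \<le> B"
  obtain C where C: "\<And>f. f \<in> L1 a b \<Longrightarrow> L1norm a b (R f) \<le> C * L1norm a b f"
    using resolvent_inverse_bounded[OF \<mu> R] by blast
  obtain W where W: "\<And>x. x \<in> {a..b} \<Longrightarrow> \<bar>w x\<bar> \<le> W"
    using continuous_on_compact_bound[OF compact_Icc w_cont] by (metis real_norm_def)
  define K where "K = B + (norm \<mu> + \<bar>W\<bar> + \<bar>Q\<bar>) * (\<bar>C\<bar> * B)"
  have "\<forall>n. \<exists>\<psi>. R (F n) \<in> L1 a b \<and> \<psi> \<in> L1 a b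
      \<and> (AE x in lebesgue_on {a..b}. complex_of_real (g x) * R (F n) x
        = integral\<^sup>L (lebesgue_on {a..b}) (\<lambda>t. complex_of_real (q t) * R (F n) t)
          + integral\<^sup>L (lebesgue_on {a..x}) \<psi>)
      \<and> L1norm a b \<psi> \<le> K
      \<and> norm (integral\<^sup>L (lebesgue_on {a..b}) (\<lambda>t. complex_of_real (q t) * R (F n) t)) \<le> K"
    unfolding K_def using F by (intro allI resolvent_image_representation[OF R C _ _ W q_meas q_bd]) auto
  then obtain \<psi> where RF: "\<And>n. R (F n) \<in> L1 a b" and \<psi>: "\<And>n. \<psi> n \<in> L1 a b"
    and rep: "\<And>n. AE x in lebesgue_on {a..b}. complex_of_real (g x) * R (F n) x
      = integral\<^sup>L (lebesgue_on {a..b}) (\<lambda>t. complex_of_real (q t) * R (F n) t)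
        + integral\<^sup>L (lebesgue_on {a..x}) (\<psi> n)"
    and \<psi>_bd: "\<And>n. L1norm a b (\<psi> n) \<le> K"
    and c_bd: "\<And>n. norm (integral\<^sup>L (lebesgue_on {a..b}) (\<lambda>t. complex_of_real (q t) * R (F n) t)) \<le> K"
    unfolding choice_iff by blast
  show "\<exists>r h. strict_mono r \<and> h \<in> L1 a b \<and> (\<lambda>n. L1norm a b (\<lambda>x. R (F (r n)) x - h x)) \<longlonglongrightarrow> 0"
    by (rule L1_convergent_subsequence_of_bounded_primitives[where \<phi>="\<lambda>n. R (F n)",
          OF a_b g_cont g_pos RF \<psi> c_bd \<psi>_bd rep])
qed

theorem proposition6:
  fixes x0 x1 :: real and g w q :: "real \<Rightarrow> real"
  assumes "0 < x0" and "x0 < x1"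
    and "\<exists>g'. continuous_on {x0..x1} g' \<and>
           (\<forall>x\<in>{x0..x1}. (g has_real_derivative g' x) (at x within {x0..x1}))"
    and "\<forall>x\<in>{x0..x1}. g x > 0"
    and "continuous_on {x0..x1} w"
    and "AE x in lebesgue_on {x0..x1}. w x \<ge> 0"
    and "q \<in> borel_measurable (lebesgue_on {x0..x1})"
    and "\<exists>B. AE x in lebesgue_on {x0..x1}. \<bar>q x\<bar> \<le> B"
    and "AE x in lebesgue_on {x0..x1}. q x \<ge> 0"
  shows "resolvent_set x0 x1 g w q \<noteq> {} \<and>
         (\<forall>\<mu> \<in> resolvent_set x0 x1 g w q. \<forall>R.
            resolvent_inverse x0 x1 g w q \<mu> R \<longrightarrow> compact_L1_map x0 x1 R)"
proof -
  have g_cont: "continuous_on {x0..x1} g"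
    using assms(3) by (auto simp: continuous_on_eq_continuous_within intro: DERIV_continuous)
  obtain Q where q_bd: "AE x in lebesgue_on {x0..x1}. \<bar>q x\<bar> \<le> Q" using assms(8) by blast
  show ?thesis
    using resolvent_set_nonempty[OF assms(2) g_cont _ assms(5,7) q_bd assms(9)]
      resolvent_compact[OF _ g_cont _ assms(5,7) q_bd] assms(2,4) by auto
qed

end
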